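(* Let $l\ge 3$, let $\mathfrak g=\mathfrak{sl}_{l+1}(\mathbb C)$, and let $$v'_{l,1}=e_{\epsilon_1-\epsilon_{l+1}}e_{\epsilon_2-\epsilon_l}-e_{\epsilon_2-\epsilon_{l+1}}e_{\epsilon_1-\epsilon_l}\in U(\mathfrak g).$$ Let $R$ be the $\mathfrak g$-submodule of $U(\mathfrak g)$ generated by $v'_{l,1}$ under the adjoint action $X_L f=[X,f]$ ($X\in\mathfrak g$, $f\in U(\mathfrak g)$), and let $R_0$ be the zero-weight subspace of $R$ with respect to $\mathfrak h$. Then $$\dim R_0=\frac{(l-2)(l+1)}{2}.$$
   Context: $\mathfrak g=\mathfrak{sl}_{l+1}(\mathbb C)$ with Cartan subalgebra $\mathfrak h$ of traceless diagonal matrices; roots $\epsilon_i-\epsilon_j$ ($i\ne j$), simple roots $\alpha_i=\epsilon_i-\epsilon_{i+1}$. For $i<j$ the root vectors are $e_{\epsilon_i-\epsilon_j}=(-1)^{j-i-1}E_{ij}$, $f_{\epsilon_i-\epsilon_j}=(-1)^{j-i-1}E_{ji}$ ($E_{ij}$ matrix units), with coroots $h_{\epsilon_i-\epsilon_j}=E_{ii}-E_{jj}$. *)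

theory Defs
  imports Complex_Main
begin

text \<open>Matrices of size n (indices 1..n, paper convention) as functions nat => nat => complex,
  zero outside {1..n}.\<close>
type_synonym cmat = "nat \<Rightarrow> nat \<Rightarrow> complex"

definition unitm :: "nat \<Rightarrow> nat \<Rightarrow> cmat" where
  "unitm i j = (\<lambda>a b. if a = i \<and> b = j then 1 else 0)"

definition mmul :: "nat \<Rightarrow> cmat \<Rightarrow> cmat \<Rightarrow> cmat" where
  "mmul n A B = (\<lambda>i j. \<Sum>k\<in>{1..n}. A i k * B k j)"

definition mbr :: "nat \<Rightarrow> cmat \<Rightarrow> cmat \<Rightarrow> cmat" where
  "mbr n A B = (\<lambda>i j. mmul n A B i j - mmul n B A i j)"

definition sl :: "nat \<Rightarrow> cmat set" where
  "sl n = {A. (\<forall>i j. A i j \<noteq> 0 \<longrightarrow> i \<in> {1..n} \<and> j \<in> {1..n}) \<and> (\<Sum>i\<in>{1..n}. A i i) = 0}"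

definition cartan :: "nat \<Rightarrow> cmat set" where
  "cartan n = {A \<in> sl n. \<forall>i j. i \<noteq> j \<longrightarrow> A i j = 0}"

definition root_e :: "nat \<Rightarrow> nat \<Rightarrow> cmat" where
  "root_e i j = (\<lambda>a b. (-1) ^ (j - i - 1) * unitm i j a b)"

text \<open>Free associative algebra over C on the letters sl n: finitely supported functions on words.\<close>
type_synonym fa = "cmat list \<Rightarrow> complex"

definition fa_carrier :: "nat \<Rightarrow> fa set" where
  "fa_carrier n = {f. finite {w. f w \<noteq> 0} \<and> (\<forall>w. f w \<noteq> 0 \<longrightarrow> set w \<subseteq> sl n)}"

definition fa_mult :: "fa \<Rightarrow> fa \<Rightarrow> fa" where
  "fa_mult f g = (\<lambda>w. \<Sum>i\<le>length w. f (take i w) * g (drop i w))"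

definition fa_gen :: "cmat \<Rightarrow> fa" where
  "fa_gen A = (\<lambda>w. if w = [A] then 1 else 0)"

definition lin_rel :: "cmat \<Rightarrow> cmat \<Rightarrow> complex \<Rightarrow> complex \<Rightarrow> fa" where
  "lin_rel A B c d = (\<lambda>w. fa_gen (\<lambda>a b. c * A a b + d * B a b) w - c * fa_gen A w - d * fa_gen B w)"

definition br_rel :: "nat \<Rightarrow> cmat \<Rightarrow> cmat \<Rightarrow> fa" where
  "br_rel n A B = (\<lambda>w. fa_mult (fa_gen A) (fa_gen B) w - fa_mult (fa_gen B) (fa_gen A) w
                        - fa_gen (mbr n A B) w)"

text \<open>The two-sided ideal defining U(sl_n) = F / U_ideal n.\<close>
inductive_set U_ideal :: "nat \<Rightarrow> fa set" for n where
  rel_lin: "A \<in> sl n \<Longrightarrow> B \<in> sl n \<Longrightarrow> lin_rel A B c d \<in> U_ideal n"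
| rel_br: "A \<in> sl n \<Longrightarrow> B \<in> sl n \<Longrightarrow> br_rel n A B \<in> U_ideal n"
| zero: "(\<lambda>_. 0) \<in> U_ideal n"
| add: "f \<in> U_ideal n \<Longrightarrow> g \<in> U_ideal n \<Longrightarrow> (\<lambda>w. f w + g w) \<in> U_ideal n"
| smult: "f \<in> U_ideal n \<Longrightarrow> (\<lambda>w. c * f w) \<in> U_ideal n"
| lmult: "f \<in> U_ideal n \<Longrightarrow> g \<in> fa_carrier n \<Longrightarrow> fa_mult g f \<in> U_ideal n"
| rmult: "f \<in> U_ideal n \<Longrightarrow> g \<in> fa_carrier n \<Longrightarrow> fa_mult f g \<in> U_ideal n"

definition ad :: "cmat \<Rightarrow> fa \<Rightarrow> fa" where
  "ad X f = (\<lambda>w. fa_mult (fa_gen X) f w - fa_mult f (fa_gen X) w)"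

text \<open>Preimage in F of the g-submodule of U(g) generated by the class of v.\<close>
inductive_set R_pre :: "nat \<Rightarrow> fa \<Rightarrow> fa set" for n v where
  base: "v \<in> R_pre n v"
| ideal: "f \<in> U_ideal n \<Longrightarrow> f \<in> R_pre n v"
| add: "f \<in> R_pre n v \<Longrightarrow> g \<in> R_pre n v \<Longrightarrow> (\<lambda>w. f w + g w) \<in> R_pre n v"
| smult: "f \<in> R_pre n v \<Longrightarrow> (\<lambda>w. c * f w) \<in> R_pre n v"
| adj: "X \<in> sl n \<Longrightarrow> f \<in> R_pre n v \<Longrightarrow> ad X f \<in> R_pre n v"

text \<open>Preimage of the zero-weight subspace R_0 (elements killed by ad h for all h in the Cartan).\<close>
definition R0_pre :: "nat \<Rightarrow> fa \<Rightarrow> fa set" where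
  "R0_pre n v = {f \<in> R_pre n v. \<forall>H \<in> cartan n. ad H f \<in> U_ideal n}"

text \<open>V / I (with I contained in V) has dimension k over C: a basis of cardinality k modulo I.\<close>
definition quot_dim :: "fa set \<Rightarrow> fa set \<Rightarrow> nat \<Rightarrow> bool" where
  "quot_dim I V k \<longleftrightarrow> (\<exists>B. finite B \<and> card B = k \<and> B \<subseteq> V
      \<and> (\<forall>c. (\<lambda>w. \<Sum>b\<in>B. c b * b w) \<in> I \<longrightarrow> (\<forall>b\<in>B. c b = 0))
      \<and> (\<forall>f\<in>V. \<exists>c. (\<lambda>w. f w - (\<Sum>b\<in>B. c b * b w)) \<in> I))"

definition vprime :: "nat \<Rightarrow> fa" where
  "vprime l = (\<lambda>w. fa_mult (fa_gen (root_e 1 (l+1))) (fa_gen (root_e 2 l)) w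
                 - fa_mult (fa_gen (root_e 2 (l+1))) (fa_gen (root_e 1 l)) w)"

end

theory Submission
  imports Defs
begin

text \<open>
  Write \<open>n = l + 1\<close> and \<open>E'\<^sub>i\<^sub>j = E\<^sub>i\<^sub>j - (\<delta>\<^sub>i\<^sub>j / n) I\<close>. Modulo the ideal defining \<open>U(sl\<^sub>n)\<close>,
  \<open>v'\<^sub>l\<^sub>,\<^sub>1\<close> equals \<open>quad x = \<Sum> x\<^sub>i\<^sub>j\<^sub>k\<^sub>m E'\<^sub>i\<^sub>j E'\<^sub>k\<^sub>m\<close> for a tensor \<open>x\<close> that is skew in \<open>(i,k)\<close>,
  skew in \<open>(j,m)\<close> and traceless in \<open>(i,j)\<close>, and the adjoint action on \<open>quad x\<close> is the natural
  action of \<open>gl\<^sub>n\<close> on the indices of \<open>x\<close>; so every element of \<open>R\<close> is congruent to \<open>quad x\<close> for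
  such an \<open>x\<close>. Zero weight with respect to the regular element \<open>diag(4\<^sup>a)\<close> forces \<open>x\<close> to be
  supported on the entries \<open>x\<^sub>i\<^sub>i\<^sub>k\<^sub>k\<close> and \<open>x\<^sub>i\<^sub>k\<^sub>k\<^sub>i = -x\<^sub>i\<^sub>i\<^sub>k\<^sub>k\<close>, i.e. to a symmetric matrix
  \<open>y\<^sub>i\<^sub>k = x\<^sub>i\<^sub>i\<^sub>k\<^sub>k\<close> with zero diagonal and zero column sums, a space of dimension \<open>n(n-3)/2\<close>.
  Explicit elements of \<open>R\<close>, obtained from \<open>v'\<^sub>l\<^sub>,\<^sub>1\<close> by adjoint actions of matrix units, span
  it. They remain linearly independent modulo the ideal because, in the representation of
  \<open>U(sl\<^sub>n)\<close> on \<open>V \<otimes> V\<close>, \<open>quad x\<close> maps \<open>E\<^sub>p\<^sub>q\<close> to a tensor whose \<open>(q,p)\<close> entry is \<open>-2 x\<^sub>p\<^sub>p\<^sub>q\<^sub>q\<close>.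
\<close>

section \<open>The free algebra modulo the ideal\<close>

definition fa_word :: "cmat list \<Rightarrow> fa" where
  "fa_word ws = (\<lambda>w. if w = ws then 1 else 0)"

lemma fa_gen_eq_word: "fa_gen A = fa_word [A]"
  by (simp add: fa_gen_def fa_word_def)

lemma fa_mult_word: "fa_mult (fa_word u) (fa_word v) = fa_word (u @ v)"
proof
  fix w
  have split_iff: "(take i w = u \<and> drop i w = v) \<longleftrightarrow> (i = length u \<and> w = u @ v)" if "i \<le> length w" for i
    using that by (metis append_take_drop_id append_eq_conv_conj length_take min.absorb2)
  have "fa_mult (fa_word u) (fa_word v) w = (\<Sum>i\<le>length w. if i = length u \<and> w = u @ v then 1 else 0)"
    unfolding fa_mult_def fa_word_def by (intro sum.cong refl) (auto simp: split_iff)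
  also have "\<dots> = fa_word (u @ v) w"
    by (cases "w = u @ v") (auto simp: fa_word_def)
  finally show "fa_mult (fa_word u) (fa_word v) w = fa_word (u @ v) w" .
qed

lemma fa_mult_diff_left: "fa_mult (\<lambda>w. f w - g w) h = (\<lambda>w. fa_mult f h w - fa_mult g h w)"
  by (simp add: fa_mult_def left_diff_distrib sum_subtractf)
lemma fa_mult_diff_right: "fa_mult h (\<lambda>w. f w - g w) = (\<lambda>w. fa_mult h f w - fa_mult h g w)"
  by (simp add: fa_mult_def right_diff_distrib sum_subtractf)
lemma fa_mult_smult_left: "fa_mult (\<lambda>w. c * f w) h = (\<lambda>w. c * fa_mult f h w)"
  by (simp add: fa_mult_def sum_distrib_left mult.assoc)
lemma fa_mult_smult_right: "fa_mult h (\<lambda>w. c * f w) = (\<lambda>w. c * fa_mult h f w)"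
  by (simp add: fa_mult_def sum_distrib_left mult.left_commute)
lemma fa_mult_sum_left: "fa_mult (\<lambda>w. \<Sum>s\<in>S. F s w) h = (\<lambda>w. \<Sum>s\<in>S. fa_mult (F s) h w)"
  by (auto simp: fa_mult_def sum_distrib_right intro!: ext sum.swap)
lemma fa_mult_sum_right: "fa_mult h (\<lambda>w. \<Sum>s\<in>S. F s w) = (\<lambda>w. \<Sum>s\<in>S. fa_mult h (F s) w)"
  by (auto simp: fa_mult_def sum_distrib_left intro!: ext sum.swap)

lemma fa_word_carrier: "set ws \<subseteq> sl n \<Longrightarrow> fa_word ws \<in> fa_carrier n"
  by (auto simp: fa_carrier_def fa_word_def)

lemma fa_gen_carrier: "A \<in> sl n \<Longrightarrow> fa_gen A \<in> fa_carrier n"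
  unfolding fa_gen_eq_word by (rule fa_word_carrier) simp

lemma U_ideal_diff: "f \<in> U_ideal n \<Longrightarrow> g \<in> U_ideal n \<Longrightarrow> (\<lambda>w. f w - g w) \<in> U_ideal n"
  using U_ideal.add[of f n "\<lambda>w. (-1) * g w"] U_ideal.smult[of g n "-1"] by simp

lemma U_ideal_sum:
  "finite S \<Longrightarrow> (\<And>s. s \<in> S \<Longrightarrow> F s \<in> U_ideal n) \<Longrightarrow> (\<lambda>w. \<Sum>s\<in>S. c s * F s w) \<in> U_ideal n"
proof (induction S rule: finite_induct)
  case empty
  then show ?case by (simp add: U_ideal.zero)
next
  case (insert x S)
  then show ?case
    using U_ideal.add[OF U_ideal.smult[of "F x" n "c x"], of "\<lambda>w. \<Sum>s\<in>S. c s * F s w"] by simp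
qed

definition U_eq :: "nat \<Rightarrow> fa \<Rightarrow> fa \<Rightarrow> bool" where
  "U_eq n f g \<longleftrightarrow> (\<lambda>w. f w - g w) \<in> U_ideal n"

lemma U_eq_refl: "U_eq n f f"
  by (simp add: U_eq_def U_ideal.zero)
lemma U_eq_sym: "U_eq n f g \<Longrightarrow> U_eq n g f"
  unfolding U_eq_def by (drule U_ideal.smult[where c="-1"]) simp
lemma U_eq_trans: "U_eq n f g \<Longrightarrow> U_eq n g h \<Longrightarrow> U_eq n f h"
  unfolding U_eq_def by (drule (1) U_ideal.add) simp
lemma U_eq_add: "U_eq n f g \<Longrightarrow> U_eq n f' g' \<Longrightarrow> U_eq n (\<lambda>w. f w + f' w) (\<lambda>w. g w + g' w)"
  unfolding U_eq_def by (drule (1) U_ideal.add) (simp add: algebra_simps)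
lemma U_eq_diff: "U_eq n f g \<Longrightarrow> U_eq n f' g' \<Longrightarrow> U_eq n (\<lambda>w. f w - f' w) (\<lambda>w. g w - g' w)"
  unfolding U_eq_def by (drule (1) U_ideal_diff) (simp add: algebra_simps)
lemma U_eq_smult: "U_eq n f g \<Longrightarrow> U_eq n (\<lambda>w. c * f w) (\<lambda>w. c * g w)"
  unfolding U_eq_def by (drule U_ideal.smult[where c=c]) (simp add: algebra_simps)
lemma U_eq_sum: "finite S \<Longrightarrow> (\<And>s. s \<in> S \<Longrightarrow> U_eq n (F s) (G s)) \<Longrightarrow>
   U_eq n (\<lambda>w. \<Sum>s\<in>S. c s * F s w) (\<lambda>w. \<Sum>s\<in>S. c s * G s w)"
  unfolding U_eq_def by (drule U_ideal_sum[where c=c and F="\<lambda>s w. F s w - G s w"])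
     (auto simp: algebra_simps sum_subtractf)
lemma U_eq_sum': "finite S \<Longrightarrow> (\<And>s. s \<in> S \<Longrightarrow> U_eq n (F s) (G s)) \<Longrightarrow>
   U_eq n (\<lambda>w. \<Sum>s\<in>S. F s w) (\<lambda>w. \<Sum>s\<in>S. G s w)"
  using U_eq_sum[of S n F G "\<lambda>_. 1"] by simp
lemma U_eq_U_ideal: "U_eq n f g \<Longrightarrow> g \<in> U_ideal n \<Longrightarrow> f \<in> U_ideal n"
  unfolding U_eq_def by (drule (1) U_ideal.add) simp
lemma U_eq_mult_right: "U_eq n f g \<Longrightarrow> h \<in> fa_carrier n \<Longrightarrow> U_eq n (fa_mult f h) (fa_mult g h)"
  unfolding U_eq_def by (drule (1) U_ideal.rmult) (simp add: fa_mult_diff_left)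
lemma U_eq_mult_left: "U_eq n f g \<Longrightarrow> h \<in> fa_carrier n \<Longrightarrow> U_eq n (fa_mult h f) (fa_mult h g)"
  unfolding U_eq_def by (drule (1) U_ideal.lmult) (simp add: fa_mult_diff_right)

lemma mult_if_0: "z * (if P then y else 0) = (if P then z * y else 0)" "(if P then y else 0) * z = (if P then y * z else 0)"
  for y z :: complex
  by simp_all

lemma sl_supp: "X \<in> sl n \<Longrightarrow> X a b \<noteq> 0 \<Longrightarrow> a \<in> {1..n} \<and> b \<in> {1..n}"
  by (auto simp: sl_def)

lemma sl_lincomb: "A \<in> sl n \<Longrightarrow> B \<in> sl n \<Longrightarrow> (\<lambda>a b. c * A a b + d * B a b) \<in> sl n"
proof -
  assume A: "A \<in> sl n" and B: "B \<in> sl n"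
  have "(\<Sum>i\<in>{1..n}. c * A i i + d * B i i) = c * (\<Sum>i\<in>{1..n}. A i i) + d * (\<Sum>i\<in>{1..n}. B i i)"
    by (simp add: sum.distrib sum_distrib_left)
  also have "\<dots> = 0" using A B by (simp add: sl_def)
  finally have "(\<Sum>i\<in>{1..n}. c * A i i + d * B i i) = 0" .
  moreover have "i \<in> {1..n} \<and> j \<in> {1..n}" if "c * A i j + d * B i j \<noteq> 0" for i j
    using that sl_supp[OF A, of i j] sl_supp[OF B, of i j] by fastforce
  ultimately show ?thesis by (simp add: sl_def)
qed

lemma sl_sum: "finite S \<Longrightarrow> (\<And>s. s \<in> S \<Longrightarrow> M s \<in> sl n) \<Longrightarrow> (\<lambda>a b. \<Sum>s\<in>S. c s * M s a b) \<in> sl n"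
proof (induction S rule: finite_induct)
  case empty
  then show ?case by (simp add: sl_def)
next
  case (insert x S)
  then have "(\<lambda>a b. c x * M x a b + 1 * (\<Sum>s\<in>S. c s * M s a b)) \<in> sl n"
    by (intro sl_lincomb) auto
  then show ?case using insert by simp
qed

lemma U_eq_gen_lincomb: "A \<in> sl n \<Longrightarrow> B \<in> sl n \<Longrightarrow>
   U_eq n (fa_gen (\<lambda>a b. c * A a b + d * B a b)) (\<lambda>w. c * fa_gen A w + d * fa_gen B w)"
  unfolding U_eq_def
  by (drule (1) U_ideal.rel_lin[where c=c and d=d]) (simp add: lin_rel_def algebra_simps)

lemma U_eq_gen_zero: "U_eq n (fa_gen (\<lambda>a b. 0)) (\<lambda>w. 0)"
  using U_eq_gen_lincomb[of "\<lambda>a b. 0" n "\<lambda>a b. 0" 0 0] by (simp add: sl_def)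

lemma U_eq_gen_smult: "A \<in> sl n \<Longrightarrow> U_eq n (fa_gen (\<lambda>a b. c * A a b)) (\<lambda>w. c * fa_gen A w)"
  using U_eq_gen_lincomb[of A n A c 0] by simp

lemma U_eq_gen_sum: "finite S \<Longrightarrow> (\<And>s. s \<in> S \<Longrightarrow> M s \<in> sl n) \<Longrightarrow>
   U_eq n (fa_gen (\<lambda>a b. \<Sum>s\<in>S. c s * M s a b)) (\<lambda>w. \<Sum>s\<in>S. c s * fa_gen (M s) w)"
proof (induction S rule: finite_induct)
  case empty
  then show ?case by (simp add: U_eq_gen_zero)
next
  case (insert x S)
  have "U_eq n (fa_gen (\<lambda>a b. c x * M x a b + 1 * (\<Sum>s\<in>S. c s * M s a b)))
          (\<lambda>w. c x * fa_gen (M x) w + 1 * fa_gen (\<lambda>a b. \<Sum>s\<in>S. c s * M s a b) w)"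
    using insert by (intro U_eq_gen_lincomb sl_sum) auto
  also have "U_eq n \<dots> (\<lambda>w. c x * fa_gen (M x) w + (\<Sum>s\<in>S. c s * fa_gen (M s) w))"
    using insert by (simp add: U_eq_add U_eq_refl)
  finally (U_eq_trans) show ?case using insert by simp
qed

lemma U_eq_gen_sum_diff:
  assumes "finite S" "\<And>s. s \<in> S \<Longrightarrow> M s \<in> sl n" "\<And>s. s \<in> S \<Longrightarrow> N s \<in> sl n"
  shows "U_eq n (fa_gen (\<lambda>a b. (\<Sum>s\<in>S. c s * M s a b) - (\<Sum>s\<in>S. d s * N s a b)))
     (\<lambda>w. \<Sum>s\<in>S. (c s * fa_gen (M s) w - d s * fa_gen (N s) w))"
proof -
  have "U_eq n (fa_gen (\<lambda>a b. 1 * (\<Sum>s\<in>S. c s * M s a b) + (-1) * (\<Sum>s\<in>S. d s * N s a b)))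
     (\<lambda>w. 1 * fa_gen (\<lambda>a b. \<Sum>s\<in>S. c s * M s a b) w + (-1) * fa_gen (\<lambda>a b. \<Sum>s\<in>S. d s * N s a b) w)"
    using assms by (intro U_eq_gen_lincomb sl_sum) auto
  also have "U_eq n \<dots> (\<lambda>w. 1 * (\<Sum>s\<in>S. c s * fa_gen (M s) w) + (-1) * (\<Sum>s\<in>S. d s * fa_gen (N s) w))"
    using assms by (intro U_eq_add U_eq_smult U_eq_gen_sum) auto
  finally (U_eq_trans) show ?thesis by (simp add: sum_subtractf)
qed

section \<open>Traceless matrix units and the adjoint action\<close>

definition idmat :: "nat \<Rightarrow> cmat" where
  "idmat n = (\<lambda>a b. if a = b \<and> a \<in> {1..n} then 1 else 0)"

definition tunit :: "nat \<Rightarrow> nat \<Rightarrow> nat \<Rightarrow> cmat" where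
  "tunit n i j = (\<lambda>a b. unitm i j a b - (if i = j then 1 / of_nat n else 0) * idmat n a b)"

lemma unitm_eq: "unitm i j a b = (if a = i then if b = j then 1 else 0 else 0)"
  by (simp add: unitm_def)

lemma unitm_in_sl: "i \<in> {1..n} \<Longrightarrow> j \<in> {1..n} \<Longrightarrow> i \<noteq> j \<Longrightarrow> unitm i j \<in> sl n"
  by (auto simp: sl_def unitm_def split: if_splits intro!: sum.neutral)

lemma tunit_offdiag: "i \<noteq> j \<Longrightarrow> tunit n i j = unitm i j"
  by (simp add: tunit_def)

lemma tunit_in_sl:
  assumes n: "n \<ge> 1" and i: "i \<in> {1..n}" and j: "j \<in> {1..n}"
  shows "tunit n i j \<in> sl n"
proof (cases "i = j")
  case False
  then show ?thesis using i j by (simp add: tunit_offdiag unitm_in_sl)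
next
  case True
  have "(\<Sum>a\<in>{1..n}. tunit n i j a a) = (\<Sum>a\<in>{1..n}. unitm i i a a) - (\<Sum>a\<in>{1..n}. 1 / of_nat n)"
    unfolding tunit_def idmat_def using True by (simp add: sum_subtractf)
  also have "(\<Sum>a\<in>{1..n}. unitm i i a a) = 1"
    using i by (simp add: unitm_eq)
  also have "(\<Sum>a\<in>{1..n}. 1 / of_nat n :: complex) = 1"
    using n by simp
  finally have "(\<Sum>a\<in>{1..n}. tunit n i j a a) = 0" by simp
  then show ?thesis using i j by (auto simp: sl_def tunit_def unitm_def idmat_def)
qed

lemma sl_eq_0: "X \<in> sl n \<Longrightarrow> a \<notin> {1..n} \<or> b \<notin> {1..n} \<Longrightarrow> X a b = 0"
  using sl_supp by blast

lemma sum_mult_unitm: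
  "i \<in> {1..n} \<Longrightarrow> (\<Sum>k\<in>{1..n}. X a k * unitm i j k b) = (if b = j then X a i else 0)"
  "j \<in> {1..n} \<Longrightarrow> (\<Sum>k\<in>{1..n}. unitm i j a k * X k b) = (if a = i then X j b else 0)"
  by (simp_all add: unitm_eq mult_if_0 sum.delta sum.delta' cong: if_cong)

lemma sum_mult_idmat:
  assumes "X \<in> sl n"
  shows "(\<Sum>k\<in>{1..n}. X a k * idmat n k b) = X a b" "(\<Sum>k\<in>{1..n}. idmat n a k * X k b) = X a b"
proof -
  have "(\<Sum>k\<in>{1..n}. X a k * idmat n k b) = (\<Sum>k\<in>{1..n}. if k = b then X a b else 0)"
    "(\<Sum>k\<in>{1..n}. idmat n a k * X k b) = (\<Sum>k\<in>{1..n}. if k = a then X a b else 0)"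
    by (intro sum.cong refl; simp add: idmat_def)+
  then show "(\<Sum>k\<in>{1..n}. X a k * idmat n k b) = X a b" "(\<Sum>k\<in>{1..n}. idmat n a k * X k b) = X a b"
    using sl_eq_0[OF assms, of a b] by auto
qed

lemma mbr_tunit:
  assumes X: "X \<in> sl n" and i: "i \<in> {1..n}" and j: "j \<in> {1..n}"
  shows "mbr n X (tunit n i j)
    = (\<lambda>a b. (\<Sum>s\<in>{1..n}. X s i * tunit n s j a b) - (\<Sum>s\<in>{1..n}. X j s * tunit n i s a b))"
proof (intro ext)
  fix a b
  define c where "c i j = (if i = j then 1 / of_nat n else 0 :: complex)" for i j :: nat
  have tunit_eq: "tunit n i j a b = unitm i j a b - c i j * idmat n a b" for i j a b
    by (simp add: tunit_def c_def)
  have "mmul n X (tunit n i j) a b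
      = (\<Sum>k\<in>{1..n}. X a k * unitm i j k b) - c i j * (\<Sum>k\<in>{1..n}. X a k * idmat n k b)"
    "mmul n (tunit n i j) X a b
      = (\<Sum>k\<in>{1..n}. unitm i j a k * X k b) - c i j * (\<Sum>k\<in>{1..n}. idmat n a k * X k b)"
    unfolding mmul_def tunit_eq
    by (simp_all add: algebra_simps sum_subtractf sum_distrib_left)
  moreover have "(\<Sum>s\<in>{1..n}. X s i * tunit n s j a b)
      = (if b = j then X a i else 0) - X j i * c j j * idmat n a b"
    "(\<Sum>s\<in>{1..n}. X j s * tunit n i s a b)
      = (if a = i then X j b else 0) - X j i * c i i * idmat n a b"
    using i j sl_eq_0[OF X]
    by (auto simp: tunit_eq right_diff_distrib sum_subtractf mult.assoc unitm_eq c_def mult_if_0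
        sum.delta sum.delta' cong: if_cong)
  ultimately show "mbr n X (tunit n i j) a b
      = (\<Sum>s\<in>{1..n}. X s i * tunit n s j a b) - (\<Sum>s\<in>{1..n}. X j s * tunit n i s a b)"
    unfolding mbr_def sum_mult_unitm[OF i] sum_mult_unitm[OF j] sum_mult_idmat[OF X]
    by (simp add: c_def)
qed

lemma ad_word2: "ad X (fa_word [A,B]) = (\<lambda>w. fa_mult (\<lambda>w. fa_word [X,A] w - fa_word [A,X] w) (fa_word [B]) w
   + fa_mult (fa_word [A]) (\<lambda>w. fa_word [X,B] w - fa_word [B,X] w) w)"
  unfolding ad_def fa_gen_eq_word fa_mult_diff_left fa_mult_diff_right fa_mult_word
  by (rule ext) simp

lemma U_eq_commutator:
  "A \<in> sl n \<Longrightarrow> B \<in> sl n \<Longrightarrow> U_eq n (\<lambda>w. fa_word [A,B] w - fa_word [B,A] w) (fa_gen (mbr n A B))"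
  unfolding U_eq_def
  by (drule (1) U_ideal.rel_br) (simp add: br_rel_def fa_gen_eq_word fa_mult_word)

lemma U_eq_ad_word2:
  assumes "X \<in> sl n" "A \<in> sl n" "B \<in> sl n"
  shows "U_eq n (ad X (fa_word [A,B])) (\<lambda>w. fa_word [mbr n X A, B] w + fa_word [A, mbr n X B] w)"
proof -
  have "U_eq n (fa_mult (\<lambda>w. fa_word [X,A] w - fa_word [A,X] w) (fa_word [B]))
      (fa_mult (fa_gen (mbr n X A)) (fa_word [B]))"
    using assms by (intro U_eq_mult_right U_eq_commutator fa_word_carrier) auto
  moreover have "U_eq n (fa_mult (fa_word [A]) (\<lambda>w. fa_word [X,B] w - fa_word [B,X] w))
      (fa_mult (fa_word [A]) (fa_gen (mbr n X B)))"
    using assms by (intro U_eq_mult_left U_eq_commutator fa_word_carrier) auto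
  ultimately show ?thesis
    unfolding ad_word2 by (drule_tac U_eq_add) (simp_all add: fa_gen_eq_word fa_mult_word)
qed

lemma ad_sum: "ad X (\<lambda>w. \<Sum>s\<in>S. F s w) = (\<lambda>w. \<Sum>s\<in>S. ad X (F s) w)"
  unfolding ad_def by (simp add: fa_mult_sum_left fa_mult_sum_right sum_subtractf)

lemma ad_diff: "ad X (\<lambda>w. f w - g w) = (\<lambda>w. ad X f w - ad X g w)"
  unfolding ad_def fa_mult_diff_left fa_mult_diff_right by (rule ext) simp

lemma ad_smult: "ad X (\<lambda>w. c * f w) = (\<lambda>w. c * ad X f w)"
  unfolding ad_def fa_mult_smult_left fa_mult_smult_right by (rule ext) (simp add: algebra_simps)

lemma ad_U_ideal: "X \<in> sl n \<Longrightarrow> f \<in> U_ideal n \<Longrightarrow> ad X f \<in> U_ideal n"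
  unfolding ad_def by (intro U_ideal_diff U_ideal.lmult U_ideal.rmult fa_gen_carrier)

lemma U_eq_ad: "X \<in> sl n \<Longrightarrow> U_eq n f g \<Longrightarrow> U_eq n (ad X f) (ad X g)"
  unfolding U_eq_def by (drule (1) ad_U_ideal) (simp add: ad_diff)

lemma fa_mult_sum_diff_word_left:
  "fa_mult (\<lambda>w. \<Sum>s\<in>S. (c s * fa_gen (M s) w - d s * fa_gen (N s) w)) (fa_word [B])
   = (\<lambda>w. \<Sum>s\<in>S. (c s * fa_word [M s, B] w - d s * fa_word [N s, B] w))"
  unfolding fa_mult_sum_left fa_mult_diff_left fa_mult_smult_left fa_gen_eq_word fa_mult_word by simp

lemma fa_mult_sum_diff_word_right:
  "fa_mult (fa_word [A]) (\<lambda>w. \<Sum>s\<in>S. (c s * fa_gen (M s) w - d s * fa_gen (N s) w))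
   = (\<lambda>w. \<Sum>s\<in>S. (c s * fa_word [A, M s] w - d s * fa_word [A, N s] w))"
  unfolding fa_mult_sum_right fa_mult_diff_right fa_mult_smult_right fa_gen_eq_word fa_mult_word by simp

lemma U_eq_ad_tunit2:
  assumes n: "n \<ge> 1" and X: "X \<in> sl n"
    and ij: "i \<in> {1..n}" "j \<in> {1..n}" and km: "k \<in> {1..n}" "m \<in> {1..n}"
  shows "U_eq n (ad X (fa_word [tunit n i j, tunit n k m]))
    (\<lambda>w. \<Sum>s\<in>{1..n}. (X s i * fa_word [tunit n s j, tunit n k m] w - X j s * fa_word [tunit n i s, tunit n k m] w
         + (X s k * fa_word [tunit n i j, tunit n s m] w - X m s * fa_word [tunit n i j, tunit n k s] w)))"
proof -
  have sl: "\<And>a b. a \<in> {1..n} \<Longrightarrow> b \<in> {1..n} \<Longrightarrow> tunit n a b \<in> sl n"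
    using n by (rule tunit_in_sl)
  have left: "U_eq n (fa_word [mbr n X (tunit n i j), tunit n k m])
     (\<lambda>w. \<Sum>s\<in>{1..n}. (X s i * fa_word [tunit n s j, tunit n k m] w - X j s * fa_word [tunit n i s, tunit n k m] w))"
  proof -
    have "U_eq n (fa_mult (fa_gen (mbr n X (tunit n i j))) (fa_word [tunit n k m]))
       (fa_mult (\<lambda>w. \<Sum>s\<in>{1..n}. (X s i * fa_gen (tunit n s j) w - X j s * fa_gen (tunit n i s) w))
         (fa_word [tunit n k m]))"
      unfolding mbr_tunit[OF X ij]
      using ij km by (intro U_eq_mult_right U_eq_gen_sum_diff fa_word_carrier) (auto intro: sl)
    then show ?thesis unfolding fa_mult_sum_diff_word_left by (simp add: fa_gen_eq_word fa_mult_word)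
  qed
  have right: "U_eq n (fa_word [tunit n i j, mbr n X (tunit n k m)])
     (\<lambda>w. \<Sum>s\<in>{1..n}. (X s k * fa_word [tunit n i j, tunit n s m] w - X m s * fa_word [tunit n i j, tunit n k s] w))"
  proof -
    have "U_eq n (fa_mult (fa_word [tunit n i j]) (fa_gen (mbr n X (tunit n k m))))
       (fa_mult (fa_word [tunit n i j])
         (\<lambda>w. \<Sum>s\<in>{1..n}. (X s k * fa_gen (tunit n s m) w - X m s * fa_gen (tunit n k s) w)))"
      unfolding mbr_tunit[OF X km]
      using ij km by (intro U_eq_mult_left U_eq_gen_sum_diff fa_word_carrier) (auto intro: sl)
    then show ?thesis unfolding fa_mult_sum_diff_word_right by (simp add: fa_gen_eq_word fa_mult_word)
  qed
  have "U_eq n (ad X (fa_word [tunit n i j, tunit n k m]))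
      (\<lambda>w. fa_word [mbr n X (tunit n i j), tunit n k m] w + fa_word [tunit n i j, mbr n X (tunit n k m)] w)"
    using X ij km by (intro U_eq_ad_word2 sl) auto
  also have "U_eq n \<dots> (\<lambda>w. (\<Sum>s\<in>{1..n}. (X s i * fa_word [tunit n s j, tunit n k m] w - X j s * fa_word [tunit n i s, tunit n k m] w))
       + (\<Sum>s\<in>{1..n}. (X s k * fa_word [tunit n i j, tunit n s m] w - X m s * fa_word [tunit n i j, tunit n k s] w)))"
    by (rule U_eq_add[OF left right])
  finally (U_eq_trans) show ?thesis by (simp add: sum.distrib)
qed

lemma sum_swap_outer_inner3: "(\<Sum>a\<in>A. \<Sum>m\<in>M. \<Sum>b\<in>B. F a m b) = (\<Sum>b\<in>B. \<Sum>m\<in>M. \<Sum>a\<in>A. F a m b)"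
proof -
  have "(\<Sum>a\<in>A. \<Sum>m\<in>M. \<Sum>b\<in>B. F a m b) = (\<Sum>a\<in>A. \<Sum>b\<in>B. \<Sum>m\<in>M. F a m b)"
    by (rule sum.cong[OF refl]) (rule sum.swap)
  also have "\<dots> = (\<Sum>b\<in>B. \<Sum>a\<in>A. \<Sum>m\<in>M. F a m b)" by (rule sum.swap)
  also have "\<dots> = (\<Sum>b\<in>B. \<Sum>m\<in>M. \<Sum>a\<in>A. F a m b)"
    by (rule sum.cong[OF refl]) (rule sum.swap)
  finally show ?thesis .
qed

lemma sum_inner_to_outer3: "(\<Sum>k\<in>K. \<Sum>m\<in>M. \<Sum>b\<in>B. F k m b) = (\<Sum>b\<in>B. \<Sum>k\<in>K. \<Sum>m\<in>M. F k m b)"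
proof -
  have "(\<Sum>k\<in>K. \<Sum>m\<in>M. \<Sum>b\<in>B. F k m b) = (\<Sum>k\<in>K. \<Sum>b\<in>B. \<Sum>m\<in>M. F k m b)"
    by (rule sum.cong[OF refl]) (rule sum.swap)
  also have "\<dots> = (\<Sum>b\<in>B. \<Sum>k\<in>K. \<Sum>m\<in>M. F k m b)" by (rule sum.swap)
  finally show ?thesis .
qed

lemma sum_inner_to_outer4: "(\<Sum>j\<in>J. \<Sum>k\<in>K. \<Sum>m\<in>M. \<Sum>b\<in>B. F j k m b) = (\<Sum>b\<in>B. \<Sum>j\<in>J. \<Sum>k\<in>K. \<Sum>m\<in>M. F j k m b)"
proof -
  have "(\<Sum>j\<in>J. \<Sum>k\<in>K. \<Sum>m\<in>M. \<Sum>b\<in>B. F j k m b) = (\<Sum>j\<in>J. \<Sum>b\<in>B. \<Sum>k\<in>K. \<Sum>m\<in>M. F j k m b)"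
    by (rule sum.cong[OF refl]) (rule sum_inner_to_outer3)
  also have "\<dots> = (\<Sum>b\<in>B. \<Sum>j\<in>J. \<Sum>k\<in>K. \<Sum>m\<in>M. F j k m b)" by (rule sum.swap)
  finally show ?thesis .
qed

lemma sum_swap_outer_inner4: "(\<Sum>a\<in>A. \<Sum>k\<in>K. \<Sum>m\<in>M. \<Sum>b\<in>B. F a k m b) = (\<Sum>b\<in>B. \<Sum>k\<in>K. \<Sum>m\<in>M. \<Sum>a\<in>A. F a k m b)"
proof -
  have "(\<Sum>a\<in>A. \<Sum>k\<in>K. \<Sum>m\<in>M. \<Sum>b\<in>B. F a k m b) = (\<Sum>a\<in>A. \<Sum>b\<in>B. \<Sum>k\<in>K. \<Sum>m\<in>M. F a k m b)"
    by (rule sum.cong[OF refl]) (rule sum_inner_to_outer3)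
  also have "\<dots> = (\<Sum>b\<in>B. \<Sum>a\<in>A. \<Sum>k\<in>K. \<Sum>m\<in>M. F a k m b)" by (rule sum.swap)
  also have "\<dots> = (\<Sum>b\<in>B. \<Sum>k\<in>K. \<Sum>m\<in>M. \<Sum>a\<in>A. F a k m b)"
    by (rule sum.cong[OF refl]) (rule sum_inner_to_outer3[symmetric])
  finally show ?thesis .
qed

lemma sum_swap_outer_inner5: "(\<Sum>a\<in>A. \<Sum>j\<in>J. \<Sum>k\<in>K. \<Sum>m\<in>M. \<Sum>b\<in>B. F a j k m b) = (\<Sum>b\<in>B. \<Sum>j\<in>J. \<Sum>k\<in>K. \<Sum>m\<in>M. \<Sum>a\<in>A. F a j k m b)"
proof -
  have "(\<Sum>a\<in>A. \<Sum>j\<in>J. \<Sum>k\<in>K. \<Sum>m\<in>M. \<Sum>b\<in>B. F a j k m b) = (\<Sum>a\<in>A. \<Sum>b\<in>B. \<Sum>j\<in>J. \<Sum>k\<in>K. \<Sum>m\<in>M. F a j k m b)"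
    by (rule sum.cong[OF refl]) (rule sum_inner_to_outer4)
  also have "\<dots> = (\<Sum>b\<in>B. \<Sum>a\<in>A. \<Sum>j\<in>J. \<Sum>k\<in>K. \<Sum>m\<in>M. F a j k m b)" by (rule sum.swap)
  also have "\<dots> = (\<Sum>b\<in>B. \<Sum>j\<in>J. \<Sum>k\<in>K. \<Sum>m\<in>M. \<Sum>a\<in>A. F a j k m b)"
    by (rule sum.cong[OF refl]) (rule sum_inner_to_outer4[symmetric])
  finally show ?thesis .
qed

type_synonym tens = "nat \<Rightarrow> nat \<Rightarrow> nat \<Rightarrow> nat \<Rightarrow> complex"

definition quad :: "nat \<Rightarrow> tens \<Rightarrow> fa" where
  "quad n x = (\<lambda>w. \<Sum>i\<in>{1..n}. \<Sum>j\<in>{1..n}. \<Sum>k\<in>{1..n}. \<Sum>m\<in>{1..n}.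
      x i j k m * fa_word [tunit n i j, tunit n k m] w)"

definition tens_act :: "nat \<Rightarrow> cmat \<Rightarrow> tens \<Rightarrow> tens" where
  "tens_act n X x = (\<lambda>i j k m. (\<Sum>s\<in>{1..n}. X i s * x s j k m) - (\<Sum>s\<in>{1..n}. x i s k m * X s j)
      + (\<Sum>s\<in>{1..n}. X k s * x i j s m) - (\<Sum>s\<in>{1..n}. x i j k s * X s m))"

lemma sum4_tens_act:
  fixes G :: tens and B :: "nat set"
  shows "(\<Sum>i\<in>B. \<Sum>j\<in>B. \<Sum>k\<in>B. \<Sum>m\<in>B. x i j k m * (\<Sum>s\<in>B. (X s i * G s j k m - X j s * G i s k m
         + (X s k * G i j s m - X m s * G i j k s))))
   = (\<Sum>i\<in>B. \<Sum>j\<in>B. \<Sum>k\<in>B. \<Sum>m\<in>B. ((\<Sum>s\<in>B. X i s * x s j k m) - (\<Sum>s\<in>B. x i s k m * X s j)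
      + (\<Sum>s\<in>B. X k s * x i j s m) - (\<Sum>s\<in>B. x i j k s * X s m)) * G i j k m)"
proof -
  have p1: "(\<Sum>i\<in>B. \<Sum>j\<in>B. \<Sum>k\<in>B. \<Sum>m\<in>B. \<Sum>s\<in>B. x i j k m * (X s i * G s j k m))
     = (\<Sum>i\<in>B. \<Sum>j\<in>B. \<Sum>k\<in>B. \<Sum>m\<in>B. (\<Sum>s\<in>B. X i s * x s j k m) * G i j k m)"
    by (subst sum_swap_outer_inner5) (simp add: sum_distrib_left sum_distrib_right mult_ac)
  have p2: "(\<Sum>i\<in>B. \<Sum>j\<in>B. \<Sum>k\<in>B. \<Sum>m\<in>B. \<Sum>s\<in>B. x i j k m * (X j s * G i s k m))
     = (\<Sum>i\<in>B. \<Sum>j\<in>B. \<Sum>k\<in>B. \<Sum>m\<in>B. (\<Sum>s\<in>B. x i s k m * X s j) * G i j k m)"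
    by (rule sum.cong[OF refl], subst sum_swap_outer_inner4)
      (simp add: sum_distrib_left sum_distrib_right mult_ac)
  have p3: "(\<Sum>i\<in>B. \<Sum>j\<in>B. \<Sum>k\<in>B. \<Sum>m\<in>B. \<Sum>s\<in>B. x i j k m * (X s k * G i j s m))
     = (\<Sum>i\<in>B. \<Sum>j\<in>B. \<Sum>k\<in>B. \<Sum>m\<in>B. (\<Sum>s\<in>B. X k s * x i j s m) * G i j k m)"
    by (rule sum.cong[OF refl], rule sum.cong[OF refl], subst sum_swap_outer_inner3)
      (simp add: sum_distrib_left sum_distrib_right mult_ac)
  have p4: "(\<Sum>i\<in>B. \<Sum>j\<in>B. \<Sum>k\<in>B. \<Sum>m\<in>B. \<Sum>s\<in>B. x i j k m * (X m s * G i j k s))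
     = (\<Sum>i\<in>B. \<Sum>j\<in>B. \<Sum>k\<in>B. \<Sum>m\<in>B. (\<Sum>s\<in>B. x i j k s * X s m) * G i j k m)"
    by (rule sum.cong[OF refl], rule sum.cong[OF refl], rule sum.cong[OF refl], subst sum.swap)
      (simp add: sum_distrib_left sum_distrib_right mult_ac)
  show ?thesis
    using p1 p2 p3 p4
    by (simp add: sum_distrib_left right_diff_distrib distrib_left left_diff_distrib distrib_right
        sum.distrib sum_subtractf)
qed

lemma U_eq_ad_quad:
  assumes n: "n \<ge> 1" and X: "X \<in> sl n"
  shows "U_eq n (ad X (quad n x)) (quad n (tens_act n X x))"
proof -
  have "ad X (quad n x) = (\<lambda>w. \<Sum>i\<in>{1..n}. \<Sum>j\<in>{1..n}. \<Sum>k\<in>{1..n}. \<Sum>m\<in>{1..n}.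
      x i j k m * ad X (fa_word [tunit n i j, tunit n k m]) w)"
    unfolding quad_def ad_sum ad_smult ..
  then have "U_eq n (ad X (quad n x)) (\<lambda>w. \<Sum>i\<in>{1..n}. \<Sum>j\<in>{1..n}. \<Sum>k\<in>{1..n}. \<Sum>m\<in>{1..n}.
     x i j k m * (\<Sum>s\<in>{1..n}. (X s i * fa_word [tunit n s j, tunit n k m] w - X j s * fa_word [tunit n i s, tunit n k m] w
         + (X s k * fa_word [tunit n i j, tunit n s m] w - X m s * fa_word [tunit n i j, tunit n k s] w))))"
    by (simp only:) (intro U_eq_sum' U_eq_sum U_eq_ad_tunit2 n X finite_atLeastAtMost; simp)
  also have "(\<lambda>w. \<Sum>i\<in>{1..n}. \<Sum>j\<in>{1..n}. \<Sum>k\<in>{1..n}. \<Sum>m\<in>{1..n}.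
     x i j k m * (\<Sum>s\<in>{1..n}. (X s i * fa_word [tunit n s j, tunit n k m] w - X j s * fa_word [tunit n i s, tunit n k m] w
         + (X s k * fa_word [tunit n i j, tunit n s m] w - X m s * fa_word [tunit n i j, tunit n k s] w))))
    = quad n (tens_act n X x)"
    unfolding quad_def tens_act_def by (rule ext) (rule sum4_tens_act)
  finally show ?thesis .
qed

lemma quad_add: "quad n (\<lambda>i j k m. x i j k m + y i j k m) = (\<lambda>w. quad n x w + quad n y w)"
  unfolding quad_def by (simp add: distrib_right sum.distrib)

lemma quad_smult: "quad n (\<lambda>i j k m. c * x i j k m) = (\<lambda>w. c * quad n x w)"
  unfolding quad_def by (simp add: sum_distrib_left mult.assoc)

lemma quad_sum: "quad n (\<lambda>i j k m. \<Sum>J\<in>S. c J * Y J i j k m) = (\<lambda>w. \<Sum>J\<in>S. c J * quad n (Y J) w)"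
proof (rule ext)
  fix w
  let ?G = "\<lambda>i j k m. fa_word [tunit n i j, tunit n k m] w" and ?B = "{1..n}"
  have "(\<Sum>i\<in>?B. \<Sum>j\<in>?B. \<Sum>k\<in>?B. \<Sum>m\<in>?B. (\<Sum>J\<in>S. c J * Y J i j k m) * ?G i j k m)
     = (\<Sum>i\<in>?B. \<Sum>j\<in>?B. \<Sum>k\<in>?B. \<Sum>m\<in>?B. \<Sum>J\<in>S. c J * (Y J i j k m * ?G i j k m))"
    by (simp add: sum_distrib_right mult.assoc)
  also have "\<dots> = (\<Sum>i\<in>?B. \<Sum>J\<in>S. \<Sum>j\<in>?B. \<Sum>k\<in>?B. \<Sum>m\<in>?B. c J * (Y J i j k m * ?G i j k m))"
    by (rule sum.cong[OF refl]) (rule sum_inner_to_outer4)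
  also have "\<dots> = (\<Sum>J\<in>S. \<Sum>i\<in>?B. \<Sum>j\<in>?B. \<Sum>k\<in>?B. \<Sum>m\<in>?B. c J * (Y J i j k m * ?G i j k m))"
    by (rule sum.swap)
  also have "\<dots> = (\<Sum>J\<in>S. c J * (\<Sum>i\<in>?B. \<Sum>j\<in>?B. \<Sum>k\<in>?B. \<Sum>m\<in>?B. Y J i j k m * ?G i j k m))"
    by (simp add: sum_distrib_left)
  finally show "quad n (\<lambda>i j k m. \<Sum>J\<in>S. c J * Y J i j k m) w = (\<Sum>J\<in>S. c J * quad n (Y J) w)"
    unfolding quad_def .
qed

lemma quad_cong:
  "(\<And>i j k m. i \<in> {1..n} \<Longrightarrow> j \<in> {1..n} \<Longrightarrow> k \<in> {1..n} \<Longrightarrow> m \<in> {1..n} \<Longrightarrow> x i j k m = y i j k m)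
   \<Longrightarrow> quad n x = quad n y"
  unfolding quad_def by (intro ext sum.cong refl) simp

lemma quad_eq_0:
  "(\<And>i j k m. i \<in> {1..n} \<Longrightarrow> j \<in> {1..n} \<Longrightarrow> k \<in> {1..n} \<Longrightarrow> m \<in> {1..n} \<Longrightarrow> x i j k m = 0)
   \<Longrightarrow> quad n x = (\<lambda>w. 0)"
  unfolding quad_def by (intro ext sum.neutral ballI) simp

section \<open>The tensor model of R\<close>

definition skew_traceless :: "nat \<Rightarrow> tens \<Rightarrow> bool" where
  "skew_traceless n x \<longleftrightarrow> (\<forall>i j k m. x k j i m = - x i j k m) \<and> (\<forall>i j k m. x i m k j = - x i j k m)
     \<and> (\<forall>k m. (\<Sum>i\<in>{1..n}. x i i k m) = 0)"

lemma skew_tracelessD: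
  assumes "skew_traceless n x"
  shows "x k j i m = - x i j k m" "x i m k j = - x i j k m" "(\<Sum>i\<in>{1..n}. x i i k m) = 0"
  using assms unfolding skew_traceless_def by blast+

lemma skew_traceless_lincomb:
  assumes x: "skew_traceless n x" and y: "skew_traceless n y"
  shows "skew_traceless n (\<lambda>i j k m. a * x i j k m + b * y i j k m)"
  unfolding skew_traceless_def
proof (intro conjI allI)
  fix i j k m
  show "a * x k j i m + b * y k j i m = - (a * x i j k m + b * y i j k m)"
    using skew_tracelessD(1)[OF x, of k j i m] skew_tracelessD(1)[OF y, of k j i m] by simp
  show "a * x i m k j + b * y i m k j = - (a * x i j k m + b * y i j k m)"
    using skew_tracelessD(2)[OF x, of i m k j] skew_tracelessD(2)[OF y, of i m k j] by simp
next
  fix k m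
  show "(\<Sum>i\<in>{1..n}. a * x i i k m + b * y i i k m) = 0"
    using skew_tracelessD(3)[OF x, of k m] skew_tracelessD(3)[OF y, of k m]
    by (simp add: sum.distrib sum_distrib_left[symmetric])
qed

lemma skew_traceless_smult: "skew_traceless n x \<Longrightarrow> skew_traceless n (\<lambda>i j k m. c * x i j k m)"
  using skew_traceless_lincomb[of n x x c 0] by simp

lemma skew_traceless_zero: "skew_traceless n (\<lambda>i j k m. 0)"
  unfolding skew_traceless_def by simp

lemma skew_traceless_sum:
  "finite S \<Longrightarrow> (\<And>J. J \<in> S \<Longrightarrow> skew_traceless n (Y J))
   \<Longrightarrow> skew_traceless n (\<lambda>i j k m. \<Sum>J\<in>S. c J * Y J i j k m)"
proof (induction S rule: finite_induct)
  case empty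
  then show ?case using skew_traceless_zero by simp
next
  case (insert x S)
  then have "skew_traceless n (\<lambda>i j k m. c x * Y x i j k m + 1 * (\<Sum>J\<in>S. c J * Y J i j k m))"
    by (intro skew_traceless_lincomb) auto
  then show ?case using insert by simp
qed

lemma tens_act_swap13: "tens_act n X (\<lambda>i j k m. x k j i m) = (\<lambda>i j k m. tens_act n X x k j i m)"
  unfolding tens_act_def by (intro ext) (simp add: algebra_simps)

lemma tens_act_swap24: "tens_act n X (\<lambda>i j k m. x i m k j) = (\<lambda>i j k m. tens_act n X x i m k j)"
  unfolding tens_act_def by (intro ext) (simp add: algebra_simps)

lemma tens_act_uminus: "tens_act n X (\<lambda>i j k m. - x i j k m) = (\<lambda>i j k m. - tens_act n X x i j k m)"
  unfolding tens_act_def by (intro ext) (simp add: sum_negf)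

lemma tens_act_trace:
  assumes tr: "\<And>k m. (\<Sum>i\<in>{1..n}. x i i k m) = 0"
  shows "(\<Sum>i\<in>{1..n}. tens_act n X x i i k m) = 0"
proof -
  have "(\<Sum>i\<in>{1..n}. \<Sum>s\<in>{1..n}. X i s * x s i k m) = (\<Sum>i\<in>{1..n}. \<Sum>s\<in>{1..n}. x i s k m * X s i)"
    by (rule trans[OF sum.swap]) (simp add: mult.commute)
  moreover have "(\<Sum>i\<in>{1..n}. \<Sum>s\<in>{1..n}. X k s * x i i s m) = 0"
    using tr by (subst sum.swap) (simp add: sum_distrib_left[symmetric])
  moreover have "(\<Sum>i\<in>{1..n}. \<Sum>s\<in>{1..n}. x i i k s * X s m) = 0"
    using tr by (subst sum.swap) (simp add: sum_distrib_right[symmetric])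
  ultimately show ?thesis
    unfolding tens_act_def by (simp add: sum.distrib sum_subtractf)
qed

lemma skew_traceless_tens_act:
  assumes x: "skew_traceless n x"
  shows "skew_traceless n (tens_act n X x)"
proof -
  have s13: "(\<lambda>i j k m. x k j i m) = (\<lambda>i j k m. - x i j k m)"
    and s24: "(\<lambda>i j k m. x i m k j) = (\<lambda>i j k m. - x i j k m)"
    by (intro ext, rule skew_tracelessD[OF x])+
  have "\<forall>i j k m. tens_act n X x k j i m = - tens_act n X x i j k m"
    using arg_cong[OF s13, of "tens_act n X"] unfolding tens_act_swap13[of n X x] tens_act_uminus[of n X x] fun_eq_iff .
  moreover have "\<forall>i j k m. tens_act n X x i m k j = - tens_act n X x i j k m"
    using arg_cong[OF s24, of "tens_act n X"] unfolding tens_act_swap24[of n X x] tens_act_uminus[of n X x] fun_eq_iff .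
  moreover have "\<forall>k m. (\<Sum>i\<in>{1..n}. tens_act n X x i i k m) = 0"
    by (intro allI tens_act_trace skew_tracelessD(3)[OF x])
  ultimately show ?thesis
    unfolding skew_traceless_def by blast
qed

lemma R_pre_U_eq_quad:
  assumes n: "n \<ge> 1" and t0: "skew_traceless n t0" "U_eq n v (quad n t0)"
  shows "f \<in> R_pre n v \<Longrightarrow> \<exists>x. skew_traceless n x \<and> U_eq n f (quad n x)"
proof (induction rule: R_pre.induct)
  case base
  then show ?case using t0 by blast
next
  case (ideal f)
  have "quad n (\<lambda>i j k m. 0) = (\<lambda>w. 0)" by (rule quad_eq_0) simp
  then show ?case using ideal skew_traceless_zero unfolding U_eq_def by fastforce
next
  case (add f g)
  then obtain x y where "skew_traceless n x" "U_eq n f (quad n x)" "skew_traceless n y" "U_eq n g (quad n y)"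
    by blast
  then show ?case
    using skew_traceless_lincomb[of n x y 1 1]
    by (intro exI[of _ "\<lambda>i j k m. x i j k m + y i j k m"]) (simp add: quad_add U_eq_add)
next
  case (smult f c)
  then obtain x where "skew_traceless n x" "U_eq n f (quad n x)" by blast
  then show ?case
    by (intro exI[of _ "\<lambda>i j k m. c * x i j k m"]) (simp add: skew_traceless_smult quad_smult U_eq_smult)
next
  case (adj X f)
  then obtain x where x: "skew_traceless n x" "U_eq n f (quad n x)" by blast
  have "U_eq n (ad X f) (ad X (quad n x))" using adj x by (intro U_eq_ad) auto
  also have "U_eq n \<dots> (quad n (tens_act n X x))" using n adj by (intro U_eq_ad_quad) auto
  finally (U_eq_trans) show ?case using x skew_traceless_tens_act by blast
qed

section \<open>Zero weight\<close>

lemma pow4_sum_inj_ordered: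
  assumes ab: "a \<le> b" and cd: "c \<le> d" and eq: "(4::nat)^a + 4^b = 4^c + 4^d"
  shows "a = c \<and> b = d"
proof -
  have bounds: "4^y \<le> (4::nat)^x + 4^y \<and> (4::nat)^x + 4^y < 4^Suc y" if "x \<le> y" for x y :: nat
  proof -
    have "(4::nat)^x \<le> 4^y" using that by (rule power_increasing) simp
    then show ?thesis using zero_less_power[of "4::nat" y] unfolding power_Suc by linarith
  qed
  have "4^b < (4::nat)^Suc d" "4^d < (4::nat)^Suc b"
    using bounds[OF ab] bounds[OF cd] eq by linarith+
  then have "b < Suc d" "d < Suc b"
    by (auto intro: power_less_imp_less_exp[of "4::nat"])
  then have "b = d" by simp
  then show ?thesis using eq by simp
qed

lemma pow4_sum_inj: "(4::nat)^i + 4^k = 4^j + 4^m \<Longrightarrow> (i = j \<and> k = m) \<or> (i = m \<and> k = j)"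
  using pow4_sum_inj_ordered[of i k j m] pow4_sum_inj_ordered[of i k m j]
    pow4_sum_inj_ordered[of k i j m] pow4_sum_inj_ordered[of k i m j]
  by (cases "i \<le> k"; cases "j \<le> m") (auto simp: add.commute)

definition weight :: "nat \<Rightarrow> nat \<Rightarrow> nat \<Rightarrow> nat \<Rightarrow> complex" where
  "weight i j k m = of_nat (4^i) - of_nat (4^j) + of_nat (4^k) - of_nat (4^m)"

lemma weight_eq_0_iff: "weight i j k m = 0 \<longleftrightarrow> (i = j \<and> k = m) \<or> (i = m \<and> k = j)"
proof
  assume "weight i j k m = 0"
  then have "(of_nat (4^i + 4^k) :: complex) = of_nat (4^j + 4^m)"
    unfolding weight_def by (simp add: algebra_simps)
  then show "(i = j \<and> k = m) \<or> (i = m \<and> k = j)"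
    by (intro pow4_sum_inj) (simp only: of_nat_eq_iff)
qed (auto simp: weight_def)

text \<open>A regular element of the Cartan subalgebra: by \<open>weight_eq_0_iff\<close>, a tensor index has
  weight zero for it only if it has weight zero for the whole Cartan subalgebra.\<close>

definition H_reg :: "nat \<Rightarrow> cmat" where
  "H_reg n = (\<lambda>a b. if a = b \<and> a \<in> {1..n}
     then of_nat (4^a) - (\<Sum>c\<in>{1..n}. of_nat (4^c)) / of_nat n else 0)"

lemma H_reg_cartan: "n \<ge> 1 \<Longrightarrow> H_reg n \<in> cartan n"
proof -
  assume n: "n \<ge> 1"
  have "(\<Sum>a\<in>{1..n}. H_reg n a a)
      = (\<Sum>a\<in>{1..n}. of_nat (4^a)) - (\<Sum>a\<in>{1..n}. (\<Sum>c\<in>{1..n}. of_nat (4^c)) / (of_nat n :: complex))"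
    unfolding H_reg_def by (simp add: sum_subtractf)
  also have "\<dots> = 0" using n by simp
  finally show ?thesis by (auto simp: cartan_def sl_def H_reg_def split: if_splits)
qed

lemma tens_act_cartan:
  assumes H: "H \<in> cartan n" and box: "i \<in> {1..n}" "j \<in> {1..n}" "k \<in> {1..n}" "m \<in> {1..n}"
  shows "tens_act n H x i j k m = (H i i - H j j + H k k - H m m) * x i j k m"
proof -
  have off: "H a b = 0" if "a \<noteq> b" for a b using H that by (simp add: cartan_def)
  have row: "(\<Sum>s\<in>{1..n}. H a s * f s) = H a a * f a" if "a \<in> {1..n}" for a f
  proof -
    have "(\<Sum>s\<in>{1..n}. H a s * f s) = (\<Sum>s\<in>{1..n}. if s = a then H a a * f a else 0)"
      by (rule sum.cong) (auto simp: off)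
    then show ?thesis using that by simp
  qed
  have col: "(\<Sum>s\<in>{1..n}. f s * H s a) = f a * H a a" if "a \<in> {1..n}" for a f
  proof -
    have "(\<Sum>s\<in>{1..n}. f s * H s a) = (\<Sum>s\<in>{1..n}. if s = a then f a * H a a else 0)"
      by (rule sum.cong) (auto simp: off)
    then show ?thesis using that by simp
  qed
  show ?thesis
    unfolding tens_act_def row[OF box(1)] col[OF box(2)] row[OF box(3)] col[OF box(4)]
    by (simp add: algebra_simps)
qed

lemma tens_act_H_reg:
  assumes "n \<ge> 1" and "i \<in> {1..n}" "j \<in> {1..n}" "k \<in> {1..n}" "m \<in> {1..n}"
  shows "tens_act n (H_reg n) x i j k m = weight i j k m * x i j k m"
  using tens_act_cartan[OF H_reg_cartan[OF assms(1)] assms(2-5)] assms(2-5) by (simp add: H_reg_def weight_def)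

lemma quad_nonzero_weight_part_U_ideal:
  assumes "finite S"
    and "\<And>i j k m. i \<in> {1..n} \<Longrightarrow> j \<in> {1..n} \<Longrightarrow> k \<in> {1..n} \<Longrightarrow> m \<in> {1..n} \<Longrightarrow> x i j k m \<noteq> 0
      \<Longrightarrow> weight i j k m \<in> insert 0 S"
    and "\<And>p. quad n (\<lambda>i j k m. weight i j k m ^ Suc p * x i j k m) \<in> U_ideal n"
  shows "quad n (\<lambda>i j k m. if weight i j k m = 0 then 0 else x i j k m) \<in> U_ideal n"
  using assms
proof (induction S arbitrary: x rule: finite_induct)
  case empty
  then have "quad n (\<lambda>i j k m. if weight i j k m = 0 then 0 else x i j k m) = (\<lambda>w. 0)"
    by (intro quad_eq_0) fastforce
  then show ?case by (simp add: U_ideal.zero)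
next
  case (insert \<mu> S)
  show ?case
  proof (cases "\<mu> = 0")
    case True
    then show ?thesis using insert by simp
  next
    case False
    txt \<open>Multiplying by \<open>weight - \<mu>\<close> removes the weight \<open>\<mu>\<close>; the nonzero weight part of \<open>x\<close> is then
      recovered from that of \<open>y\<close>, because \<open>weight \<cdot> x\<close> already lies in the ideal.\<close>
    define y where "y i j k m = (weight i j k m - \<mu>) * x i j k m" for i j k m
    have "(\<lambda>i j k m. weight i j k m ^ Suc p * y i j k m) = (\<lambda>i j k m.
        weight i j k m ^ Suc (Suc p) * x i j k m + (- \<mu>) * (weight i j k m ^ Suc p * x i j k m))" for p
      by (simp add: y_def fun_eq_iff algebra_simps)
    then have "quad n (\<lambda>i j k m. weight i j k m ^ Suc p * y i j k m) \<in> U_ideal n" for p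
      using U_ideal.add[OF insert.prems(2) U_ideal.smult[OF insert.prems(2)]] by (simp only: quad_add quad_smult)
    moreover have "weight i j k m \<in> insert 0 S"
      if "i \<in> {1..n}" "j \<in> {1..n}" "k \<in> {1..n}" "m \<in> {1..n}" "y i j k m \<noteq> 0" for i j k m
      using insert.prems(1)[OF that(1-4)] that(5) by (auto simp: y_def)
    ultimately have ny: "quad n (\<lambda>i j k m. if weight i j k m = 0 then 0 else y i j k m) \<in> U_ideal n"
      using insert.IH by blast
    have "(\<lambda>i j k m. if weight i j k m = 0 then 0 else y i j k m) = (\<lambda>i j k m.
        weight i j k m ^ Suc 0 * x i j k m + (- \<mu>) * (if weight i j k m = 0 then 0 else x i j k m))"
      by (simp add: y_def fun_eq_iff algebra_simps)
    then have "quad n (\<lambda>i j k m. if weight i j k m = 0 then 0 else y i j k m)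
        = (\<lambda>w. quad n (\<lambda>i j k m. weight i j k m ^ Suc 0 * x i j k m) w
              + (- \<mu>) * quad n (\<lambda>i j k m. if weight i j k m = 0 then 0 else x i j k m) w)"
      by (simp only: quad_add quad_smult)
    then have "(\<lambda>w. \<mu> * quad n (\<lambda>i j k m. if weight i j k m = 0 then 0 else x i j k m) w) \<in> U_ideal n"
      using U_ideal_diff[OF insert.prems(2)[of 0] ny] by simp
    from U_ideal.smult[OF this, of "1 / \<mu>"] show ?thesis using False by simp
  qed
qed

definition zero_weight :: "tens \<Rightarrow> bool" where
  "zero_weight x \<longleftrightarrow> (\<forall>i j k m. \<not> ((i = j \<and> k = m) \<or> (i = m \<and> k = j)) \<longrightarrow> x i j k m = 0)"

lemma zero_weight_part: "zero_weight (\<lambda>i j k m. if weight i j k m = 0 then x i j k m else 0)"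
  unfolding zero_weight_def by (auto simp: weight_eq_0_iff)

lemma skew_traceless_zero_weight_part:
  assumes x: "skew_traceless n x"
  shows "skew_traceless n (\<lambda>i j k m. if weight i j k m = 0 then x i j k m else 0)"
  unfolding skew_traceless_def
proof (intro conjI allI)
  fix i j k m
  have "weight k j i m = weight i j k m" "weight i m k j = weight i j k m"
    by (simp_all add: weight_def algebra_simps)
  then show "(if weight k j i m = 0 then x k j i m else 0) = - (if weight i j k m = 0 then x i j k m else 0)"
    "(if weight i m k j = 0 then x i m k j else 0) = - (if weight i j k m = 0 then x i j k m else 0)"
    using skew_tracelessD(1)[OF x, of k j i m] skew_tracelessD(2)[OF x, of i m k j] by simp_all
next
  fix k m
  have "weight i i k m = of_nat (4^k) - of_nat (4^m)" for i
    by (simp add: weight_def)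
  then show "(\<Sum>i\<in>{1..n}. if weight i i k m = 0 then x i i k m else 0) = 0"
    using skew_tracelessD(3)[OF x, of k m] by (cases "(of_nat (4^k) - of_nat (4^m) :: complex) = 0") simp_all
qed

lemma zero_weight_ad_cartan:
  assumes n: "n \<ge> 1" and H: "H \<in> cartan n" and x: "zero_weight x"
  shows "ad H (quad n x) \<in> U_ideal n"
proof -
  have "quad n (tens_act n H x) = (\<lambda>w. 0)"
  proof (rule quad_eq_0)
    fix i j k m assume box: "i \<in> {1..n}" "j \<in> {1..n}" "k \<in> {1..n}" "m \<in> {1..n}"
    show "tens_act n H x i j k m = 0"
    proof (cases "x i j k m = 0")
      case False
      then have "(i = j \<and> k = m) \<or> (i = m \<and> k = j)" using x unfolding zero_weight_def by blast
      then show ?thesis unfolding tens_act_cartan[OF H box] by auto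
    qed (simp add: tens_act_cartan[OF H box])
  qed
  then show ?thesis
    using U_eq_ad_quad[OF n, of H x] H unfolding U_eq_def by (simp add: cartan_def)
qed

lemma R0_pre_U_eq_quad:
  assumes n: "n \<ge> 1" and t0: "skew_traceless n t0" "U_eq n v (quad n t0)" and f: "f \<in> R0_pre n v"
  obtains x where "skew_traceless n x" "zero_weight x" "U_eq n f (quad n x)"
proof -
  have H: "H_reg n \<in> sl n" using H_reg_cartan[OF n] by (simp add: cartan_def)
  obtain x where x: "skew_traceless n x" and fx: "U_eq n f (quad n x)"
    using R_pre_U_eq_quad[OF n t0] f by (auto simp: R0_pre_def)
  have act: "quad n (tens_act n (H_reg n) z) = quad n (\<lambda>i j k m. weight i j k m * z i j k m)" for z
    by (rule quad_cong) (simp add: tens_act_H_reg[OF n])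
  have powers: "quad n (\<lambda>i j k m. weight i j k m ^ Suc p * x i j k m) \<in> U_ideal n" for p
  proof (induction p)
    case 0
    have "ad (H_reg n) f \<in> U_ideal n" using f H_reg_cartan[OF n] by (simp add: R0_pre_def)
    moreover have "U_eq n (quad n (tens_act n (H_reg n) x)) (ad (H_reg n) f)"
      using U_eq_trans[OF U_eq_ad[OF H fx] U_eq_ad_quad[OF n H]] by (rule U_eq_sym)
    ultimately show ?case using act by (simp add: U_eq_U_ideal)
  next
    case (Suc p)
    have "U_eq n (quad n (tens_act n (H_reg n) (\<lambda>i j k m. weight i j k m ^ Suc p * x i j k m)))
       (ad (H_reg n) (quad n (\<lambda>i j k m. weight i j k m ^ Suc p * x i j k m)))"
      using U_eq_ad_quad[OF n H] by (rule U_eq_sym)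
    then have "quad n (tens_act n (H_reg n) (\<lambda>i j k m. weight i j k m ^ Suc p * x i j k m)) \<in> U_ideal n"
      using ad_U_ideal[OF H Suc] by (rule U_eq_U_ideal)
    then show ?case by (simp add: act mult.assoc)
  qed
  have "quad n (\<lambda>i j k m. if weight i j k m = 0 then 0 else x i j k m) \<in> U_ideal n"
    using powers by (intro quad_nonzero_weight_part_U_ideal[where S="(\<lambda>(i,j,k,m). weight i j k m) ` ({1..n} \<times> {1..n} \<times> {1..n} \<times> {1..n})"]) force+
  moreover have "quad n x = (\<lambda>w. quad n (\<lambda>i j k m. if weight i j k m = 0 then x i j k m else 0) w
       + quad n (\<lambda>i j k m. if weight i j k m = 0 then 0 else x i j k m) w)"
    unfolding quad_add[symmetric] by (rule quad_cong) simp
  ultimately have "U_eq n (quad n x) (quad n (\<lambda>i j k m. if weight i j k m = 0 then x i j k m else 0))"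
    unfolding U_eq_def by simp
  then show ?thesis
    using that skew_traceless_zero_weight_part[OF x] zero_weight_part U_eq_trans[OF fx] by blast
qed

section \<open>Elements of R obtained from the generator\<close>

definition kron :: "nat \<Rightarrow> nat \<Rightarrow> complex" where
  "kron a b = (if a = b then 1 else 0)"

definition wedge :: "nat \<Rightarrow> nat \<Rightarrow> nat \<Rightarrow> nat \<Rightarrow> complex" where
  "wedge a c i k = kron i a * kron k c - kron i c * kron k a"

definition wedge_tens :: "nat \<Rightarrow> nat \<Rightarrow> nat \<Rightarrow> nat \<Rightarrow> tens" where
  "wedge_tens a c b d = (\<lambda>i j k m. wedge a c i k * wedge b d j m)"

lemma tens_act_unitm:
  assumes "p \<in> {1..n}" "q \<in> {1..n}"
  shows "tens_act n (unitm p q) x i j k m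
    = kron i p * x q j k m - x i p k m * kron q j + kron k p * x i j q m - x i j k p * kron q m"
proof -
  have "(\<Sum>s\<in>{1..n}. unitm p q i s * f s) = kron i p * f q" "(\<Sum>s\<in>{1..n}. f s * unitm p q s j) = f p * kron q j"
    for f :: "nat \<Rightarrow> complex" and i j
  proof -
    have "(if P then 1 else 0) * z = (if P then z else 0)" "z * (if P then 1 else 0) = (if P then z else 0)"
      for P and z :: complex
      by simp_all
    then show "(\<Sum>s\<in>{1..n}. unitm p q i s * f s) = kron i p * f q"
      "(\<Sum>s\<in>{1..n}. f s * unitm p q s j) = f p * kron q j"
      using assms by (simp_all add: unitm_eq kron_def sum.delta sum.delta' cong: if_cong)
  qed
  then show ?thesis unfolding tens_act_def by simp
qed

lemma tens_act_unitm_wedge_tens: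
  assumes "p \<in> {1..n}" "q \<in> {1..n}"
  shows "tens_act n (unitm p q) (wedge_tens a c b d) i j k m
    = kron q a * wedge_tens p c b d i j k m + kron q c * wedge_tens a p b d i j k m
     - kron p b * wedge_tens a c q d i j k m - kron p d * wedge_tens a c b q i j k m"
proof -
  have row: "kron i p * wedge a c q k + kron k p * wedge a c i q = kron q a * wedge p c i k + kron q c * wedge a p i k"
    and col: "kron q j * wedge b d p m + kron q m * wedge b d j p = kron p b * wedge q d j m + kron p d * wedge b q j m"
    by (simp_all add: wedge_def kron_def)
  have "tens_act n (unitm p q) (wedge_tens a c b d) i j k m
      = (kron i p * wedge a c q k + kron k p * wedge a c i q) * wedge b d j m
        - wedge a c i k * (kron q j * wedge b d p m + kron q m * wedge b d j p)"
    unfolding tens_act_unitm[OF assms] wedge_tens_def by (simp add: algebra_simps)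
  also have "\<dots> = (kron q a * wedge p c i k + kron q c * wedge a p i k) * wedge b d j m
        - wedge a c i k * (kron p b * wedge q d j m + kron p d * wedge b q j m)"
    by (simp only: row col)
  also have "\<dots> = kron q a * wedge_tens p c b d i j k m + kron q c * wedge_tens a p b d i j k m
     - kron p b * wedge_tens a c q d i j k m - kron p d * wedge_tens a c b q i j k m"
    unfolding wedge_tens_def by (simp add: algebra_simps)
  finally show ?thesis .
qed

lemma tens_act_lincomb: "tens_act n X (\<lambda>i j k m. \<alpha> * y i j k m + \<beta> * z i j k m)
   = (\<lambda>i j k m. \<alpha> * tens_act n X y i j k m + \<beta> * tens_act n X z i j k m)"
  unfolding tens_act_def by (simp add: sum.distrib sum_distrib_left algebra_simps)

lemma R_pre_diff: "f \<in> R_pre n v \<Longrightarrow> g \<in> R_pre n v \<Longrightarrow> (\<lambda>w. f w - g w) \<in> R_pre n v"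
  using R_pre.add[of f n v "\<lambda>w. (-1) * g w"] R_pre.smult[of g n v "-1"] by simp

lemma quad_R_pre_tens_act:
  assumes n: "n \<ge> 1" and X: "X \<in> sl n" and z: "quad n z \<in> R_pre n v"
  shows "quad n (tens_act n X z) \<in> R_pre n v"
proof -
  have "(\<lambda>w. ad X (quad n z) w - (ad X (quad n z) w - quad n (tens_act n X z) w)) \<in> R_pre n v"
    using U_eq_ad_quad[OF n X, of z] unfolding U_eq_def
    by (intro R_pre_diff R_pre.adj X z R_pre.ideal)
  then show ?thesis by simp
qed

lemma quad_R_pre_cong:
  assumes "quad n z \<in> R_pre n v"
    and "\<And>i j k m. i \<in> {1..n} \<Longrightarrow> j \<in> {1..n} \<Longrightarrow> k \<in> {1..n} \<Longrightarrow> m \<in> {1..n} \<Longrightarrow> z i j k m = z' i j k m"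
  shows "quad n z' \<in> R_pre n v"
  using assms quad_cong[of n z z'] by metis

lemma quad_R_pre_smult: "quad n y \<in> R_pre n v \<Longrightarrow> quad n (\<lambda>i j k m. \<alpha> * y i j k m) \<in> R_pre n v"
  unfolding quad_smult by (rule R_pre.smult)

lemma wedge_tens_R_pre_unitm:
  assumes "quad n (wedge_tens a c b d) \<in> R_pre n v" and "p \<in> {1..n}" "q \<in> {1..n}" "p \<noteq> q"
  shows "quad n (\<lambda>i j k m. kron q a * wedge_tens p c b d i j k m + kron q c * wedge_tens a p b d i j k m
     - kron p b * wedge_tens a c q d i j k m - kron p d * wedge_tens a c b q i j k m) \<in> R_pre n v"
proof -
  have "quad n (tens_act n (unitm p q) (wedge_tens a c b d)) \<in> R_pre n v"
    using assms by (intro quad_R_pre_tens_act unitm_in_sl) auto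
  then show ?thesis by (rule quad_R_pre_cong) (simp add: tens_act_unitm_wedge_tens[OF assms(2,3)])
qed

lemma wedge_tens_R_pre_swap_rows:
  "quad n (wedge_tens a c b d) \<in> R_pre n v \<Longrightarrow> quad n (wedge_tens c a b d) \<in> R_pre n v"
  using quad_R_pre_smult[of n "wedge_tens a c b d" v "-1"]
  by (simp add: wedge_tens_def wedge_def algebra_simps)

lemma wedge_tens_R_pre_swap_cols:
  "quad n (wedge_tens a c b d) \<in> R_pre n v \<Longrightarrow> quad n (wedge_tens a c d b) \<in> R_pre n v"
  using quad_R_pre_smult[of n "wedge_tens a c b d" v "-1"]
  by (simp add: wedge_tens_def wedge_def algebra_simps)

lemma wedge_tens_R_pre_relabel:
  assumes R: "quad n (wedge_tens a c b d) \<in> R_pre n v" and box: "a \<in> {1..n}" "x \<in> {1..n}"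
    and "a \<noteq> c" "x \<noteq> b" "x \<noteq> d"
  shows "quad n (wedge_tens x c b d) \<in> R_pre n v"
proof (cases "x = a")
  case False
  have "quad n (\<lambda>i j k m. kron a a * wedge_tens x c b d i j k m + kron a c * wedge_tens a x b d i j k m
     - kron x b * wedge_tens a c a d i j k m - kron x d * wedge_tens a c b a i j k m) \<in> R_pre n v"
    using R box False by (intro wedge_tens_R_pre_unitm) auto
  then show ?thesis using assms by (simp add: kron_def)
qed (use R in simp)

lemma wedge_tens_R_pre_swap_mid:
  assumes R: "quad n (wedge_tens a c b d) \<in> R_pre n v" and box: "b \<in> {1..n}" "c \<in> {1..n}"
    and "a \<noteq> c" "a \<noteq> b" "b \<noteq> c" "b \<noteq> d" "c \<noteq> d"
  shows "quad n (wedge_tens a b c d) \<in> R_pre n v"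
proof -
  have "quad n (\<lambda>i j k m. kron c a * wedge_tens b c b d i j k m + kron c c * wedge_tens a b b d i j k m
     - kron b b * wedge_tens a c c d i j k m - kron b d * wedge_tens a c b c i j k m) \<in> R_pre n v"
    using assms by (intro wedge_tens_R_pre_unitm) auto
  then have "quad n (\<lambda>i j k m. 1 * wedge_tens a b b d i j k m + (-1) * wedge_tens a c c d i j k m) \<in> R_pre n v"
    using assms by (simp add: kron_def)
  then have "quad n (tens_act n (unitm b c)
      (\<lambda>i j k m. 1 * wedge_tens a b b d i j k m + (-1) * wedge_tens a c c d i j k m)) \<in> R_pre n v"
    using assms by (intro quad_R_pre_tens_act unitm_in_sl) auto
  then have "quad n (\<lambda>i j k m. (-2) * wedge_tens a b c d i j k m) \<in> R_pre n v"
    unfolding tens_act_lincomb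
    by (rule quad_R_pre_cong) (use assms in \<open>simp add: tens_act_unitm_wedge_tens kron_def\<close>)
  from quad_R_pre_smult[OF this, of "-1/2"] show ?thesis by simp
qed

lemma wedge_tens_R_pre_exchange:
  assumes R: "quad n (wedge_tens a c b d) \<in> R_pre n v"
    and box: "a \<in> {1..n}" "b \<in> {1..n}" "c \<in> {1..n}" "d \<in> {1..n}"
    and dist: "a \<noteq> c" "a \<noteq> b" "a \<noteq> d" "b \<noteq> c" "b \<noteq> d" "c \<noteq> d"
  shows "quad n (wedge_tens b d a c) \<in> R_pre n v"
proof -
  have "quad n (wedge_tens c b a d) \<in> R_pre n v"
    using wedge_tens_R_pre_swap_mid[OF wedge_tens_R_pre_swap_rows[OF R]] box dist by simp
  then have "quad n (wedge_tens b c d a) \<in> R_pre n v"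
    by (intro wedge_tens_R_pre_swap_cols[of n b c a d] wedge_tens_R_pre_swap_rows[of n c b a d])
  then have "quad n (wedge_tens b d c a) \<in> R_pre n v"
    using wedge_tens_R_pre_swap_mid box dist by simp
  then show ?thesis by (rule wedge_tens_R_pre_swap_cols)
qed

lemma wedge_tens_R_pre_rows:
  assumes R: "quad n (wedge_tens a c b d) \<in> R_pre n v" and box: "a \<in> {1..n}" "c \<in> {1..n}" "a \<noteq> c"
    and xy: "x \<in> {1..n}" "y \<in> {1..n}" "x \<noteq> y" "x \<notin> {b, d}" "y \<notin> {b, d}"
  shows "quad n (wedge_tens x y b d) \<in> R_pre n v"
proof -
  have second: "quad n (wedge_tens x y b d) \<in> R_pre n v"
    if Rz: "quad n (wedge_tens x z b d) \<in> R_pre n v" and z: "z \<in> {1..n}" "x \<noteq> z" for z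
  proof -
    have "quad n (wedge_tens y x b d) \<in> R_pre n v"
      using wedge_tens_R_pre_relabel[OF wedge_tens_R_pre_swap_rows[OF Rz] z(1) xy(2)] z xy by simp
    then show ?thesis by (rule wedge_tens_R_pre_swap_rows)
  qed
  show ?thesis
  proof (cases "x = c")
    case True
    then show ?thesis
      using second[of a] wedge_tens_R_pre_swap_rows[OF R] box by simp
  next
    case False
    then show ?thesis
      using second[OF wedge_tens_R_pre_relabel[OF R box(1) xy(1) box(3)]] box xy by simp
  qed
qed

lemma wedge_tens_R_pre_cols:
  assumes R: "quad n (wedge_tens a c b d) \<in> R_pre n v"
    and box: "a \<in> {1..n}" "b \<in> {1..n}" "c \<in> {1..n}" "d \<in> {1..n}"
    and dist: "a \<noteq> c" "a \<noteq> b" "a \<noteq> d" "b \<noteq> c" "b \<noteq> d" "c \<noteq> d"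
    and xy: "x \<in> {1..n}" "y \<in> {1..n}" "x \<noteq> y" "x \<notin> {a, c}" "y \<notin> {a, c}"
  shows "quad n (wedge_tens a c x y) \<in> R_pre n v"
proof -
  have "quad n (wedge_tens x y a c) \<in> R_pre n v"
    using wedge_tens_R_pre_rows[OF wedge_tens_R_pre_exchange[OF R box dist] box(2,4) dist(5) xy] .
  then show ?thesis
    by (rule wedge_tens_R_pre_exchange) (use box dist xy in auto)
qed

definition zw_tens :: "nat \<Rightarrow> nat \<Rightarrow> nat \<Rightarrow> nat \<Rightarrow> tens" where
  "zw_tens a c b d = (\<lambda>i j k m. wedge_tens b d b d i j k m - wedge_tens b c b c i j k m
      - wedge_tens a d a d i j k m + wedge_tens a c a c i j k m)"

text \<open>Acting by the matrix units \<open>E\<^sub>b\<^sub>a\<close> and then \<open>E\<^sub>d\<^sub>c\<close> moves a wedge tensor to weight zero.\<close>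

lemma zw_tens_R_pre:
  assumes R: "quad n (wedge_tens a c b d) \<in> R_pre n v"
    and box: "a \<in> {1..n}" "b \<in> {1..n}" "c \<in> {1..n}" "d \<in> {1..n}"
    and "a \<noteq> c" "a \<noteq> b" "a \<noteq> d" "b \<noteq> c" "b \<noteq> d" "c \<noteq> d"
  shows "quad n (zw_tens a c b d) \<in> R_pre n v"
proof -
  have "quad n (\<lambda>i j k m. kron a a * wedge_tens b c b d i j k m + kron a c * wedge_tens a b b d i j k m
     - kron b b * wedge_tens a c a d i j k m - kron b d * wedge_tens a c b a i j k m) \<in> R_pre n v"
    using assms by (intro wedge_tens_R_pre_unitm) auto
  then have "quad n (\<lambda>i j k m. 1 * wedge_tens b c b d i j k m + (-1) * wedge_tens a c a d i j k m) \<in> R_pre n v"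
    using assms by (simp add: kron_def)
  then have "quad n (tens_act n (unitm d c)
      (\<lambda>i j k m. 1 * wedge_tens b c b d i j k m + (-1) * wedge_tens a c a d i j k m)) \<in> R_pre n v"
    using assms by (intro quad_R_pre_tens_act unitm_in_sl) auto
  then show ?thesis
    unfolding tens_act_lincomb
    by (rule quad_R_pre_cong) (use assms in \<open>simp add: tens_act_unitm_wedge_tens kron_def zw_tens_def\<close>)
qed

lemma sum4_kron:
  assumes "a \<in> {1..n}" "b \<in> {1..n}" "c \<in> {1..n}" "d \<in> {1..n}"
  shows "(\<Sum>i\<in>{1..n}. \<Sum>j\<in>{1..n}. \<Sum>k\<in>{1..n}. \<Sum>m\<in>{1..n}.
      x i j k m * (kron i a * kron j b * kron k c * kron m d)) = x a b c d"
proof -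
  have "z * (if P then y else 0) = (if P then z * y else 0)" for P and y z :: complex
    by simp
  then show ?thesis
    using assms by (simp add: kron_def sum.delta cong: if_cong)
qed

lemma quad_wedge_tens:
  assumes "a \<in> {1..n}" "b \<in> {1..n}" "c \<in> {1..n}" "d \<in> {1..n}"
  shows "quad n (wedge_tens a c b d) = (\<lambda>w. fa_word [tunit n a b, tunit n c d] w
      - fa_word [tunit n a d, tunit n c b] w - fa_word [tunit n c b, tunit n a d] w
      + fa_word [tunit n c d, tunit n a b] w)"
proof (rule ext)
  fix w
  let ?G = "\<lambda>i j k m. fa_word [tunit n i j, tunit n k m] w"
  have expand: "wedge_tens a c b d = (\<lambda>i j k m. kron i a * kron j b * kron k c * kron m d
      - kron i a * kron j d * kron k c * kron m b - kron i c * kron j b * kron k a * kron m d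
      + kron i c * kron j d * kron k a * kron m b)"
    by (simp add: fun_eq_iff wedge_tens_def wedge_def algebra_simps)
  have "quad n (wedge_tens a c b d) w = (\<Sum>i\<in>{1..n}. \<Sum>j\<in>{1..n}. \<Sum>k\<in>{1..n}. \<Sum>m\<in>{1..n}.
      ?G i j k m * (kron i a * kron j b * kron k c * kron m d) - ?G i j k m * (kron i a * kron j d * kron k c * kron m b)
    - ?G i j k m * (kron i c * kron j b * kron k a * kron m d) + ?G i j k m * (kron i c * kron j d * kron k a * kron m b))"
    unfolding quad_def expand by (intro sum.cong refl) (simp add: algebra_simps)
  also have "\<dots> = ?G a b c d - ?G a d c b - ?G c b a d + ?G c d a b"
    unfolding sum.distrib sum_subtractf sum4_kron[OF assms] sum4_kron[OF assms(1,4,3,2)]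
      sum4_kron[OF assms(3,2,1,4)] sum4_kron[OF assms(3,4,1,2)] ..
  finally show "quad n (wedge_tens a c b d) w = fa_word [tunit n a b, tunit n c d] w
      - fa_word [tunit n a d, tunit n c b] w - fa_word [tunit n c b, tunit n a d] w
      + fa_word [tunit n c d, tunit n a b] w" .
qed

lemma U_eq_word_commute:
  assumes "A \<in> sl n" "B \<in> sl n" "mbr n A B = (\<lambda>x y. 0)"
  shows "U_eq n (fa_word [A,B]) (fa_word [B,A])"
  using U_eq_trans[OF U_eq_commutator[OF assms(1,2), unfolded assms(3)] U_eq_gen_zero[of n]]
  unfolding U_eq_def by simp

lemma mbr_unitm_eq_0: "b \<noteq> c \<Longrightarrow> d \<noteq> a \<Longrightarrow> mbr n (unitm a b) (unitm c d) = (\<lambda>x y. 0)"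
  by (intro ext) (simp add: mbr_def mmul_def unitm_eq sum.neutral)

lemma root_e_in_sl: "i \<in> {1..n} \<Longrightarrow> j \<in> {1..n} \<Longrightarrow> i \<noteq> j \<Longrightarrow> root_e i j \<in> sl n"
  using sl_lincomb[OF unitm_in_sl unitm_in_sl, of i n j i j "(-1)^(j-i-1)" 0] unfolding root_e_def by simp

lemma U_eq_gen_root_e_mult:
  assumes "i \<in> {1..n}" "j \<in> {1..n}" "i \<noteq> j" "p \<in> {1..n}" "q \<in> {1..n}" "p \<noteq> q"
  shows "U_eq n (fa_mult (fa_gen (root_e i j)) (fa_gen (root_e p q)))
    (\<lambda>w. ((-1)^(j-i-1) * (-1)^(q-p-1)) * fa_word [unitm i j, unitm p q] w)"
proof -
  have gen: "U_eq n (fa_gen (root_e a b)) (\<lambda>w. (-1)^(b-a-1) * fa_gen (unitm a b) w)"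
    if "a \<in> {1..n}" "b \<in> {1..n}" "a \<noteq> b" for a b
    unfolding root_e_def using that by (intro U_eq_gen_smult unitm_in_sl)
  have "U_eq n (fa_mult (fa_gen (root_e i j)) (fa_gen (root_e p q)))
      (fa_mult (\<lambda>w. (-1)^(j-i-1) * fa_gen (unitm i j) w) (fa_gen (root_e p q)))"
    using assms by (intro U_eq_mult_right gen fa_gen_carrier root_e_in_sl)
  also have "U_eq n \<dots> (\<lambda>w. (-1)^(j-i-1) * fa_mult (fa_gen (unitm i j)) (\<lambda>w. (-1)^(q-p-1) * fa_gen (unitm p q) w) w)"
    unfolding fa_mult_smult_left
    using assms by (intro U_eq_smult U_eq_mult_left gen fa_gen_carrier unitm_in_sl)
  finally (U_eq_trans) show ?thesis
    by (simp add: fa_mult_smult_right fa_gen_eq_word fa_mult_word mult.assoc)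
qed

lemma vprime_U_eq:
  assumes l: "l \<ge> 3"
  shows "U_eq (l+1) (vprime l)
    (\<lambda>w. fa_word [unitm 1 (l+1), unitm 2 l] w - fa_word [unitm 2 (l+1), unitm 1 l] w)"
proof -
  have "(-1::complex)^(l+1-1-1) * (-1)^(l-2-1) = 1" "(-1::complex)^(l+1-2-1) * (-1)^(l-1-1) = 1"
  proof -
    have "l + 1 - 1 - 1 = (l - 2 - 1) + 2" "l + 1 - 2 - 1 = l - 1 - 1" using l by arith+
    then show "(-1::complex)^(l+1-1-1) * (-1)^(l-2-1) = 1" "(-1::complex)^(l+1-2-1) * (-1)^(l-1-1) = 1"
      by (simp_all add: power_add power_mult_distrib[symmetric])
  qed
  moreover have "U_eq (l+1) (fa_mult (fa_gen (root_e 1 (l+1))) (fa_gen (root_e 2 l)))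
      (\<lambda>w. ((-1)^(l+1-1-1) * (-1)^(l-2-1)) * fa_word [unitm 1 (l+1), unitm 2 l] w)"
    "U_eq (l+1) (fa_mult (fa_gen (root_e 2 (l+1))) (fa_gen (root_e 1 l)))
      (\<lambda>w. ((-1)^(l+1-2-1) * (-1)^(l-1-1)) * fa_word [unitm 2 (l+1), unitm 1 l] w)"
    using l by (intro U_eq_gen_root_e_mult; simp)+
  ultimately show ?thesis
    unfolding vprime_def by (auto dest: U_eq_diff)
qed

lemma quad_wedge_tens_vprime:
  assumes l: "l \<ge> 3"
  shows "U_eq (l+1) (quad (l+1) (wedge_tens 1 2 (l+1) l)) (\<lambda>w. 2 * vprime l w)"
proof -
  let ?n = "l+1"
  let ?P = "fa_word [unitm 1 ?n, unitm 2 l]" and ?Q = "fa_word [unitm 2 ?n, unitm 1 l]"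
  have box: "1 \<in> {1..?n}" "2 \<in> {1..?n}" "l \<in> {1..?n}" "?n \<in> {1..?n}" using l by auto
  have quad_eq: "quad ?n (wedge_tens 1 2 ?n l)
      = (\<lambda>w. ?P w - fa_word [unitm 1 l, unitm 2 ?n] w - ?Q w + fa_word [unitm 2 l, unitm 1 ?n] w)"
    unfolding quad_wedge_tens[OF box(1,4,2,3)] using l by (simp add: tunit_offdiag)
  have "U_eq ?n (fa_word [unitm 1 l, unitm 2 ?n]) ?Q" "U_eq ?n (fa_word [unitm 2 l, unitm 1 ?n]) ?P"
    using l box by (intro U_eq_word_commute unitm_in_sl mbr_unitm_eq_0; simp)+
  then have "U_eq ?n (quad ?n (wedge_tens 1 2 ?n l)) (\<lambda>w. ?P w - ?Q w - ?Q w + ?P w)"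
    unfolding quad_eq by (intro U_eq_add U_eq_diff U_eq_refl)
  also have "(\<lambda>w. ?P w - ?Q w - ?Q w + ?P w) = (\<lambda>w. 2 * (?P w - ?Q w))"
    by (simp add: fun_eq_iff)
  also have "U_eq ?n \<dots> (\<lambda>w. 2 * vprime l w)"
    by (intro U_eq_smult U_eq_sym[OF vprime_U_eq[OF l]])
  finally (U_eq_trans) show ?thesis .
qed

lemma skew_traceless_wedge_tens:
  assumes "a \<noteq> b" "a \<noteq> d" "c \<noteq> b" "c \<noteq> d"
  shows "skew_traceless n (wedge_tens a c b d)"
  unfolding skew_traceless_def
proof (intro conjI allI)
  fix k m
  have "wedge_tens a c b d i i k m = 0" for i
    using assms by (simp add: wedge_tens_def wedge_def kron_def)
  then show "(\<Sum>i\<in>{1..n}. wedge_tens a c b d i i k m) = 0" by simp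
qed (simp_all add: wedge_tens_def wedge_def algebra_simps)

lemma vprime_U_eq_quad:
  assumes "l \<ge> 3"
  shows "U_eq (l+1) (vprime l) (quad (l+1) (\<lambda>i j k m. (1/2) * wedge_tens 1 2 (l+1) l i j k m))"
  using U_eq_smult[OF quad_wedge_tens_vprime[OF assms], of "1/2"]
  unfolding quad_smult by (simp add: U_eq_sym)

lemma wedge_tens_vprime_R_pre:
  assumes "l \<ge> 3"
  shows "quad (l+1) (wedge_tens 1 2 (l+1) l) \<in> R_pre (l+1) (vprime l)"
proof -
  have "(\<lambda>w. (quad (l+1) (wedge_tens 1 2 (l+1) l) w - 2 * vprime l w) + 2 * vprime l w) \<in> R_pre (l+1) (vprime l)"
    using quad_wedge_tens_vprime[OF assms] unfolding U_eq_def
    by (intro R_pre.add R_pre.ideal R_pre.smult R_pre.base)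
  then show ?thesis by simp
qed

section \<open>A basis of the zero weight part\<close>

text \<open>With respect to the coordinates \<open>x\<^sub>a\<^sub>a\<^sub>c\<^sub>c\<close> (\<open>3 \<le> a < c\<close>) and \<open>x\<^sub>1\<^sub>1\<^sub>v\<^sub>v\<close> (\<open>4 \<le> v\<close>), which
  determine a zero weight tensor in the model, the family below is triangular with diagonal entries \<open>\<plusminus>1\<close>:
  \<open>basis_tens (a,c,1,2)\<close> has a single nonzero coordinate of the first kind, namely \<open>x\<^sub>a\<^sub>a\<^sub>c\<^sub>c = 1\<close>, and
  \<open>basis_tens (1,3,2,v)\<close> has none of the first kind and \<open>x\<^sub>1\<^sub>1\<^sub>v\<^sub>v = -1\<close> as its only one of the second.\<close>

definition idx_A :: "nat \<Rightarrow> (nat \<times> nat \<times> nat \<times> nat) set" where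
  "idx_A n = (\<lambda>(a,c). (a,c,1,2)) ` {(a,c). 3 \<le> a \<and> a < c \<and> c \<le> n}"

definition idx_B :: "nat \<Rightarrow> (nat \<times> nat \<times> nat \<times> nat) set" where
  "idx_B n = (\<lambda>v. (1,3,2,v)) ` {4..n}"

definition basis_idx :: "nat \<Rightarrow> (nat \<times> nat \<times> nat \<times> nat) set" where
  "basis_idx n = idx_A n \<union> idx_B n"

definition basis_tens :: "nat \<times> nat \<times> nat \<times> nat \<Rightarrow> tens" where
  "basis_tens J = (case J of (a,c,b,d) \<Rightarrow> zw_tens a c b d)"

lemma idx_A_iff: "J \<in> idx_A n \<longleftrightarrow> (\<exists>a c. J = (a,c,1,2) \<and> 3 \<le> a \<and> a < c \<and> c \<le> n)"
  unfolding idx_A_def by auto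

lemma idx_B_iff: "J \<in> idx_B n \<longleftrightarrow> (\<exists>v. J = (1,3,2,v) \<and> 4 \<le> v \<and> v \<le> n)"
  unfolding idx_B_def by auto

lemma finite_idx_A: "finite (idx_A n)"
  unfolding idx_A_def by (rule finite_imageI, rule finite_subset[of _ "{..n} \<times> {..n}"]) auto

lemma finite_idx_B: "finite (idx_B n)"
  unfolding idx_B_def by simp

lemma finite_basis_idx: "finite (basis_idx n)"
  unfolding basis_idx_def idx_B_def using finite_idx_A by simp

lemma idx_A_idx_B_disjoint: "idx_A n \<inter> idx_B n = {}"
  unfolding idx_A_def idx_B_def by auto

lemma wedge_tens_vprime_R_pre_A:
  assumes "l \<ge> 3" "3 \<le> a" "3 \<le> c" "a \<le> l+1" "c \<le> l+1" "a \<noteq> c"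
  shows "quad (l+1) (wedge_tens a c 1 2) \<in> R_pre (l+1) (vprime l)"
proof -
  have "quad (l+1) (wedge_tens (l+1) l 1 2) \<in> R_pre (l+1) (vprime l)"
    by (rule wedge_tens_R_pre_exchange[OF wedge_tens_vprime_R_pre[OF assms(1)]]) (use assms(1) in auto)
  then show ?thesis by (rule wedge_tens_R_pre_rows) (use assms in auto)
qed

lemma wedge_tens_vprime_R_pre_B:
  assumes "l \<ge> 3" "4 \<le> w" "w \<le> l+1"
  shows "quad (l+1) (wedge_tens 1 3 2 w) \<in> R_pre (l+1) (vprime l)"
proof -
  have "quad (l+1) (wedge_tens 3 4 1 2) \<in> R_pre (l+1) (vprime l)"
    using assms by (intro wedge_tens_vprime_R_pre_A) auto
  then have "quad (l+1) (wedge_tens 3 1 4 2) \<in> R_pre (l+1) (vprime l)"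
    by (rule wedge_tens_R_pre_swap_mid) (use assms in auto)
  then have "quad (l+1) (wedge_tens 3 1 2 w) \<in> R_pre (l+1) (vprime l)"
    by (rule wedge_tens_R_pre_cols) (use assms in auto)
  then show ?thesis by (rule wedge_tens_R_pre_swap_rows)
qed

lemma zero_weight_zw_tens: "zero_weight (zw_tens a c b d)"
  unfolding zero_weight_def zw_tens_def
proof (intro allI impI)
  fix i j k m :: nat
  assume "\<not> ((i = j \<and> k = m) \<or> (i = m \<and> k = j))"
  then have "wedge_tens p q p q i j k m = 0" for p q
    by (auto simp: wedge_tens_def wedge_def kron_def)
  then show "wedge_tens b d b d i j k m - wedge_tens b c b c i j k m
      - wedge_tens a d a d i j k m + wedge_tens a c a c i j k m = 0"
    by simp
qed

lemma skew_traceless_zw_tens: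
  assumes "a \<in> {1..n}" "b \<in> {1..n}" "c \<in> {1..n}" "d \<in> {1..n}"
    and "a \<noteq> c" "a \<noteq> b" "a \<noteq> d" "b \<noteq> c" "b \<noteq> d" "c \<noteq> d"
  shows "skew_traceless n (zw_tens a c b d)"
  unfolding skew_traceless_def
proof (intro conjI allI)
  fix k m
  have contr: "(\<Sum>i\<in>{1..n}. wedge_tens p q p q i i k m) = kron k q * kron m q + kron k p * kron m p"
    if "p \<in> {1..n}" "q \<in> {1..n}" "p \<noteq> q" for p q
  proof -
    have "(\<Sum>i\<in>{1..n}. wedge_tens p q p q i i k m)
        = (\<Sum>i\<in>{1..n}. (if i = p then kron k q * kron m q else 0) + (if i = q then kron k p * kron m p else 0))"
      by (rule sum.cong) (auto simp: wedge_tens_def wedge_def kron_def that)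
    then show ?thesis using that by (simp add: sum.distrib)
  qed
  show "(\<Sum>i\<in>{1..n}. zw_tens a c b d i i k m) = 0"
    unfolding zw_tens_def sum.distrib sum_subtractf contr[OF assms(2,4,9)] contr[OF assms(2,3,8)]
      contr[OF assms(1,4,7)] contr[OF assms(1,3,5)]
    by simp
qed (simp_all add: zw_tens_def wedge_tens_def wedge_def algebra_simps)

lemma zero_weight_basis_tens: "zero_weight (basis_tens J)"
  by (simp add: basis_tens_def zero_weight_zw_tens split: prod.split)

lemma skew_traceless_basis_tens: "J \<in> basis_idx n \<Longrightarrow> skew_traceless n (basis_tens J)"
  unfolding basis_idx_def Un_iff idx_A_iff idx_B_iff basis_tens_def
  by (elim disjE exE conjE) (simp_all add: skew_traceless_zw_tens)

lemma quad_basis_tens_R0_pre: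
  assumes l: "l \<ge> 3" and J: "J \<in> basis_idx (l+1)"
  shows "quad (l+1) (basis_tens J) \<in> R0_pre (l+1) (vprime l)"
proof -
  have "quad (l+1) (basis_tens J) \<in> R_pre (l+1) (vprime l)"
    using J unfolding basis_idx_def Un_iff idx_A_iff idx_B_iff
  proof (elim disjE exE conjE)
    fix a c assume "J = (a,c,1,2)" "3 \<le> a" "a < c" "c \<le> l+1"
    then show ?thesis
      unfolding basis_tens_def using wedge_tens_vprime_R_pre_A[OF l, of a c]
      by (simp, intro zw_tens_R_pre) auto
  next
    fix v assume "J = (1,3,2,v)" "4 \<le> v" "v \<le> l+1"
    then show ?thesis
      unfolding basis_tens_def using wedge_tens_vprime_R_pre_B[OF l, of v]
      by (simp, intro zw_tens_R_pre) auto
  qed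
  moreover have "ad H (quad (l+1) (basis_tens J)) \<in> U_ideal (l+1)" if "H \<in> cartan (l+1)" for H
    using zero_weight_ad_cartan[OF _ that zero_weight_basis_tens] by simp
  ultimately show ?thesis by (simp add: R0_pre_def)
qed

lemma wedge_tens_diag: "a \<noteq> c \<Longrightarrow> wedge_tens a c a c i i k k = kron i a * kron k c + kron i c * kron k a"
  by (simp add: wedge_tens_def wedge_def kron_def)

lemma basis_tens_coord_A:
  assumes "J \<in> basis_idx n" "3 \<le> a" "a < c"
  shows "basis_tens J a a c c = (if J = (a,c,1,2) then 1 else 0)"
  using assms unfolding basis_idx_def Un_iff idx_A_iff idx_B_iff basis_tens_def zw_tens_def
  by (elim disjE exE conjE) (auto simp: wedge_tens_diag kron_def)

lemma basis_tens_coord_B: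
  assumes "J \<in> idx_B n" "4 \<le> v"
  shows "basis_tens J 1 1 v v = (if J = (1,3,2,v) then -1 else 0)"
  using assms unfolding idx_B_iff basis_tens_def zw_tens_def
  by (elim exE conjE) (auto simp: wedge_tens_diag kron_def)

section \<open>Linear independence via the representation on 2-tensors\<close>

type_synonym tens2 = "nat \<Rightarrow> nat \<Rightarrow> complex"

definition fin_supp :: "fa \<Rightarrow> bool" where "fin_supp f \<longleftrightarrow> finite {w. f w \<noteq> 0}"

definition rep2 :: "nat \<Rightarrow> cmat \<Rightarrow> tens2 \<Rightarrow> tens2" where
  "rep2 n A u = (\<lambda>i j. (\<Sum>p\<in>{1..n}. A i p * u p j) + (\<Sum>q\<in>{1..n}. A j q * u i q))"

primrec rep2_word :: "nat \<Rightarrow> cmat list \<Rightarrow> tens2 \<Rightarrow> tens2" where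
  "rep2_word n [] u = u"
| "rep2_word n (A # ws) u = rep2 n A (rep2_word n ws u)"

definition rep2_fa :: "nat \<Rightarrow> fa \<Rightarrow> tens2 \<Rightarrow> tens2" where
  "rep2_fa n f u = (\<lambda>i j. \<Sum>w\<in>{w. f w \<noteq> 0}. f w * rep2_word n w u i j)"

lemma rep2_sum: "rep2 n A (\<lambda>i j. \<Sum>s\<in>S. c s * U s i j) = (\<lambda>i j. \<Sum>s\<in>S. c s * rep2 n A (U s) i j)"
  unfolding rep2_def
  by (intro ext) (simp add: sum_distrib_left distrib_left sum.distrib mult.left_commute sum.swap[of _ S])

lemma rep2_word_sum: "rep2_word n ws (\<lambda>i j. \<Sum>s\<in>S. c s * U s i j) = (\<lambda>i j. \<Sum>s\<in>S. c s * rep2_word n ws (U s) i j)"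
  by (induction ws) (simp_all add: rep2_sum)

lemma rep2_word_zero: "rep2_word n ws (\<lambda>i j. 0) = (\<lambda>i j. 0)"
  using rep2_word_sum[where S="{}" and n=n and ws=ws] by simp

lemma rep2_word_append: "rep2_word n (u @ v) x = rep2_word n u (rep2_word n v x)"
  by (induction u) simp_all

lemma rep2_lincomb_mat: "rep2 n (\<lambda>a b. c * A a b + d * B a b) u = (\<lambda>i j. c * rep2 n A u i j + d * rep2 n B u i j)"
  unfolding rep2_def by (intro ext) (simp add: algebra_simps sum.distrib sum_distrib_left)

lemma sum_mult_sum_swap: "(\<Sum>p\<in>S. a p * (\<Sum>q\<in>T. b p q * (u q::complex))) = (\<Sum>q\<in>T. (\<Sum>p\<in>S. a p * b p q) * u q)"
  by (simp add: sum_distrib_left sum_distrib_right mult.assoc sum.swap[of _ S])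

lemma sum_mult_sum_commute:
  "(\<Sum>p\<in>S. a p * (\<Sum>q\<in>T. b q * (u p q::complex))) = (\<Sum>q\<in>T. b q * (\<Sum>p\<in>S. a p * u p q))"
  by (simp add: sum_distrib_left mult.left_commute sum.swap[of _ S])

lemma rep2_commutator:
  "rep2 n A (rep2 n B u) i j - rep2 n B (rep2 n A u) i j = rep2 n (mbr n A B) u i j"
proof -
  let ?S = "{1..n}"
  have "(\<Sum>p\<in>?S. A i p * (\<Sum>p'\<in>?S. B p p' * u p' j)) - (\<Sum>p\<in>?S. B i p * (\<Sum>p'\<in>?S. A p p' * u p' j))
      = (\<Sum>p'\<in>?S. mbr n A B i p' * u p' j)"
    "(\<Sum>q\<in>?S. A j q * (\<Sum>q'\<in>?S. B q q' * u i q')) - (\<Sum>q\<in>?S. B j q * (\<Sum>q'\<in>?S. A q q' * u i q'))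
      = (\<Sum>q'\<in>?S. mbr n A B j q' * u i q')"
    unfolding sum_mult_sum_swap mbr_def mmul_def by (simp_all add: left_diff_distrib sum_subtractf)
  then show ?thesis
    unfolding rep2_def
    by (simp add: distrib_left sum.distrib sum_mult_sum_commute[where b="B j"] sum_mult_sum_commute[where b="B i"]
        algebra_simps)
qed

lemma fin_supp_word[simp]: "fin_supp (fa_word ws)"
proof -
  have "{w. fa_word ws w \<noteq> 0} = {ws}" by (auto simp: fa_word_def)
  then show ?thesis by (simp add: fin_supp_def)
qed

lemma fin_supp_add[simp]: "fin_supp f \<Longrightarrow> fin_supp g \<Longrightarrow> fin_supp (\<lambda>w. f w + g w)"
  unfolding fin_supp_def by (rule finite_subset[of _ "{w. f w \<noteq> 0} \<union> {w. g w \<noteq> 0}"]) auto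
lemma fin_supp_smult[simp]: "fin_supp f \<Longrightarrow> fin_supp (\<lambda>w. c * f w)"
  unfolding fin_supp_def by (rule finite_subset[of _ "{w. f w \<noteq> 0}"]) auto
lemma fin_supp_diff[simp]: "fin_supp f \<Longrightarrow> fin_supp g \<Longrightarrow> fin_supp (\<lambda>w. f w - g w)"
  unfolding fin_supp_def by (rule finite_subset[of _ "{w. f w \<noteq> 0} \<union> {w. g w \<noteq> 0}"]) auto
lemma fin_supp_zero[simp]: "fin_supp (\<lambda>w. 0)" by (simp add: fin_supp_def)

lemma fin_supp_sum[simp]: "finite S \<Longrightarrow> \<forall>s\<in>S. fin_supp (F s) \<Longrightarrow> fin_supp (\<lambda>w. \<Sum>s\<in>S. F s w)"
proof (induction S rule: finite_induct)
  case empty then show ?case by simp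
next
  case (insert x S)
  have "fin_supp (\<lambda>w. F x w + (\<Sum>s\<in>S. F s w))" using insert by (intro fin_supp_add) auto
  then show ?case using insert by simp
qed

lemma fin_supp_mult[simp]: "fin_supp f \<Longrightarrow> fin_supp g \<Longrightarrow> fin_supp (fa_mult f g)"
proof -
  assume f: "fin_supp f" and g: "fin_supp g"
  have "{w. fa_mult f g w \<noteq> 0} \<subseteq> (\<lambda>(a,b). a @ b) ` ({w. f w \<noteq> 0} \<times> {w. g w \<noteq> 0})"
  proof
    fix w assume "w \<in> {w. fa_mult f g w \<noteq> 0}"
    then have "(\<Sum>i\<le>length w. f (take i w) * g (drop i w)) \<noteq> 0" by (simp add: fa_mult_def)
    then obtain i where "f (take i w) * g (drop i w) \<noteq> 0" using sum.not_neutral_contains_not_neutral by blast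
    then show "w \<in> (\<lambda>(a,b). a @ b) ` ({w. f w \<noteq> 0} \<times> {w. g w \<noteq> 0})"
      by (intro image_eqI[of _ _ "(take i w, drop i w)"]) auto
  qed
  moreover have "finite ((\<lambda>(a,b). a @ b) ` ({w. f w \<noteq> 0} \<times> {w. g w \<noteq> 0}))"
    using f g by (simp add: fin_supp_def)
  ultimately show ?thesis unfolding fin_supp_def by (rule finite_subset)
qed

lemma fin_supp_gen [simp]: "fin_supp (fa_gen A)"
  by (simp add: fa_gen_eq_word)

lemma fin_supp_carrier: "f \<in> fa_carrier n \<Longrightarrow> fin_supp f"
  by (simp add: fa_carrier_def fin_supp_def)

lemma rep2_fa_supp:
  assumes "finite S" "{w. f w \<noteq> 0} \<subseteq> S"
  shows "rep2_fa n f u i j = (\<Sum>w\<in>S. f w * rep2_word n w u i j)"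
  unfolding rep2_fa_def using assms by (intro sum.mono_neutral_left) auto

lemma rep2_fa_lincomb:
  assumes f: "fin_supp f" and g: "fin_supp g"
  shows "rep2_fa n (\<lambda>w. \<alpha> * f w + \<beta> * g w) u i j = \<alpha> * rep2_fa n f u i j + \<beta> * rep2_fa n g u i j"
proof -
  let ?S = "{w. f w \<noteq> 0} \<union> {w. g w \<noteq> 0}"
  have fin: "finite ?S" using f g by (simp add: fin_supp_def)
  have "rep2_fa n (\<lambda>w. \<alpha> * f w + \<beta> * g w) u i j = (\<Sum>w\<in>?S. (\<alpha> * f w + \<beta> * g w) * rep2_word n w u i j)"
    using fin by (intro rep2_fa_supp) auto
  also have "\<dots> = \<alpha> * (\<Sum>w\<in>?S. f w * rep2_word n w u i j) + \<beta> * (\<Sum>w\<in>?S. g w * rep2_word n w u i j)"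
    by (simp add: algebra_simps sum.distrib sum_distrib_left)
  also have "(\<Sum>w\<in>?S. f w * rep2_word n w u i j) = rep2_fa n f u i j"
    using fin by (intro rep2_fa_supp[symmetric]) auto
  also have "(\<Sum>w\<in>?S. g w * rep2_word n w u i j) = rep2_fa n g u i j"
    using fin by (intro rep2_fa_supp[symmetric]) auto
  finally show ?thesis .
qed

lemma rep2_fa_smult: "fin_supp f \<Longrightarrow> rep2_fa n (\<lambda>w. c * f w) u i j = c * rep2_fa n f u i j"
  using rep2_fa_lincomb[of f f n c 0 u i j] by simp

lemma rep2_fa_add:
  "fin_supp f \<Longrightarrow> fin_supp g \<Longrightarrow> rep2_fa n (\<lambda>w. f w + g w) u i j = rep2_fa n f u i j + rep2_fa n g u i j"
  using rep2_fa_lincomb[of f g n 1 1 u i j] by simp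

lemma rep2_fa_diff:
  "fin_supp f \<Longrightarrow> fin_supp g \<Longrightarrow> rep2_fa n (\<lambda>w. f w - g w) u i j = rep2_fa n f u i j - rep2_fa n g u i j"
  using rep2_fa_lincomb[of f g n 1 "-1" u i j] by simp

lemma rep2_fa_sum:
  assumes "finite S" "\<forall>s\<in>S. fin_supp (F s)"
  shows "rep2_fa n (\<lambda>w. \<Sum>s\<in>S. F s w) u i j = (\<Sum>s\<in>S. rep2_fa n (F s) u i j)"
  using assms
proof (induction S rule: finite_induct)
  case empty
  show ?case by (simp add: rep2_fa_def)
next
  case (insert x S)
  have "rep2_fa n (\<lambda>w. F x w + (\<Sum>s\<in>S. F s w)) u i j = rep2_fa n (F x) u i j + rep2_fa n (\<lambda>w. \<Sum>s\<in>S. F s w) u i j"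
    using insert by (intro rep2_fa_add) auto
  then show ?case using insert by simp
qed

lemma rep2_fa_word: "rep2_fa n (fa_word ws) u i j = rep2_word n ws u i j"
  by (subst rep2_fa_supp[of "{ws}"]) (auto simp: fa_word_def)

lemma rep2_fa_gen: "rep2_fa n (fa_gen A) u = rep2 n A u"
  by (intro ext) (simp add: fa_gen_eq_word rep2_fa_word)

lemma rep2_fa_zero_vec: "rep2_fa n f (\<lambda>i j. 0) i j = 0"
  unfolding rep2_fa_def rep2_word_zero by simp

lemma fa_expand_words: "fin_supp f \<Longrightarrow> (\<lambda>w. \<Sum>a\<in>{w. f w \<noteq> 0}. f a * fa_word a w) = f"
proof (rule ext)
  fix w assume f: "fin_supp f"
  have "(\<Sum>a\<in>{w. f w \<noteq> 0}. f a * fa_word a w) = (\<Sum>a\<in>{w. f w \<noteq> 0}. if a = w then f w else 0)"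
    by (rule sum.cong) (auto simp: fa_word_def)
  also have "\<dots> = f w" using f by (simp add: fin_supp_def)
  finally show "(\<Sum>a\<in>{w. f w \<noteq> 0}. f a * fa_word a w) = f w" .
qed

lemma rep2_fa_mult:
  assumes f: "fin_supp f" and g: "fin_supp g"
  shows "rep2_fa n (fa_mult f g) u i j = rep2_fa n f (rep2_fa n g u) i j"
proof -
  define Sf where "Sf = {w. f w \<noteq> 0}"
  define Sg where "Sg = {w. g w \<noteq> 0}"
  have finf: "finite Sf" and fing: "finite Sg" using f g by (simp_all add: fin_supp_def Sf_def Sg_def)
  have ef: "(\<lambda>w. \<Sum>a\<in>Sf. f a * fa_word a w) = f" unfolding Sf_def using f by (rule fa_expand_words)
  have eg: "(\<lambda>w. \<Sum>b\<in>Sg. g b * fa_word b w) = g" unfolding Sg_def using g by (rule fa_expand_words)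
  have "fa_mult f g = fa_mult (\<lambda>w. \<Sum>a\<in>Sf. f a * fa_word a w) (\<lambda>w. \<Sum>b\<in>Sg. g b * fa_word b w)"
    unfolding ef eg ..
  also have "\<dots> = (\<lambda>w. \<Sum>a\<in>Sf. f a * (\<Sum>b\<in>Sg. g b * fa_word (a @ b) w))"
    unfolding fa_mult_sum_left fa_mult_smult_left fa_mult_sum_right fa_mult_smult_right fa_mult_word ..
  finally have e: "fa_mult f g = (\<lambda>w. \<Sum>a\<in>Sf. f a * (\<Sum>b\<in>Sg. g b * fa_word (a @ b) w))" .
  have "rep2_fa n (fa_mult f g) u i j = (\<Sum>a\<in>Sf. rep2_fa n (\<lambda>w. f a * (\<Sum>b\<in>Sg. g b * fa_word (a @ b) w)) u i j)"
    unfolding e using finf fing by (intro rep2_fa_sum) auto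
  also have "\<dots> = (\<Sum>a\<in>Sf. f a * (\<Sum>b\<in>Sg. g b * rep2_word n (a @ b) u i j))"
  proof (rule sum.cong[OF refl])
    fix a
    have "rep2_fa n (\<lambda>w. f a * (\<Sum>b\<in>Sg. g b * fa_word (a @ b) w)) u i j = f a * rep2_fa n (\<lambda>w. \<Sum>b\<in>Sg. g b * fa_word (a @ b) w) u i j"
      using fing by (intro rep2_fa_smult) auto
    also have "rep2_fa n (\<lambda>w. \<Sum>b\<in>Sg. g b * fa_word (a @ b) w) u i j = (\<Sum>b\<in>Sg. rep2_fa n (\<lambda>w. g b * fa_word (a @ b) w) u i j)"
      using fing by (intro rep2_fa_sum) auto
    also have "\<dots> = (\<Sum>b\<in>Sg. g b * rep2_word n (a @ b) u i j)"
      by (simp add: rep2_fa_smult rep2_fa_word)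
    finally show "rep2_fa n (\<lambda>w. f a * (\<Sum>b\<in>Sg. g b * fa_word (a @ b) w)) u i j = f a * (\<Sum>b\<in>Sg. g b * rep2_word n (a @ b) u i j)" .
  qed
  also have "\<dots> = rep2_fa n f (rep2_fa n g u) i j"
  proof -
    have ag: "rep2_fa n g u = (\<lambda>i j. \<Sum>b\<in>Sg. g b * rep2_word n b u i j)" unfolding rep2_fa_def Sg_def ..
    have "rep2_fa n f (rep2_fa n g u) i j = (\<Sum>a\<in>Sf. f a * rep2_word n a (rep2_fa n g u) i j)"
      using finf by (intro rep2_fa_supp) (auto simp: Sf_def)
    then show ?thesis unfolding ag rep2_word_sum rep2_word_append by simp
  qed
  finally show ?thesis .
qed




lemma rep2_fa_lin_rel: "rep2_fa n (lin_rel A B c d) u i j = 0"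
  by (simp add: lin_rel_def rep2_fa_diff rep2_fa_smult rep2_fa_gen rep2_lincomb_mat)

lemma rep2_fa_br_rel: "rep2_fa n (br_rel n A B) u i j = 0"
  using rep2_commutator[of n A B u i j] by (simp add: br_rel_def rep2_fa_diff rep2_fa_mult rep2_fa_gen)

lemma U_ideal_rep2_fa: "f \<in> U_ideal n \<Longrightarrow> fin_supp f \<and> (\<forall>u i j. rep2_fa n f u i j = 0)"
proof (induction rule: U_ideal.induct)
  case (rel_lin A B c d)
  have "fin_supp (lin_rel A B c d)" by (simp add: lin_rel_def)
  with rep2_fa_lin_rel show ?case by blast
next
  case (rel_br A B)
  have "fin_supp (br_rel n A B)" by (simp add: br_rel_def)
  with rep2_fa_br_rel show ?case by blast
next
  case zero
  show ?case by (simp add: rep2_fa_def)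
next
  case (lmult f g)
  then have "fin_supp g" by (simp add: fin_supp_carrier)
  moreover have "rep2_fa n f u = (\<lambda>i j. 0)" for u using lmult by (auto intro!: ext)
  ultimately show ?case using lmult by (simp add: rep2_fa_mult rep2_fa_zero_vec)
next
  case (rmult f g)
  then have "fin_supp g" by (simp add: fin_supp_carrier)
  then show ?case using rmult by (simp add: rep2_fa_mult)
qed (simp_all add: rep2_fa_add rep2_fa_smult)

lemma rep2_unitm:
  assumes "p \<in> {1..n}" "q \<in> {1..n}"
  shows "rep2 n M (unitm p q) a b = M a p * kron b q + M b q * kron a p"
proof -
  have 1: "(\<Sum>t\<in>{1..n}. M a t * unitm p q t b) = M a p * kron b q"
    using assms by (simp add: unitm_eq kron_def mult_if_0 sum.delta' cong: if_cong)
  have 2: "(\<Sum>t\<in>{1..n}. M b t * unitm p q a t) = M b q * kron a p"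
    using assms by (simp add: unitm_eq kron_def mult_if_0 sum.delta' cong: if_cong)
  show ?thesis unfolding rep2_def 1 2 ..
qed

lemma rep2_word2_unitm:
  assumes pq: "p \<in> {1..n}" "q \<in> {1..n}" "p \<noteq> q"
  shows "rep2_word n [N, M] (unitm p q) q p = N q p * M p q + N p q * M q p"
proof -
  have "rep2_word n [N, M] (unitm p q) q p = (\<Sum>s\<in>{1..n}. N q s * rep2 n M (unitm p q) s p) + (\<Sum>t\<in>{1..n}. N p t * rep2 n M (unitm p q) q t)"
    by (simp add: rep2_def)
  also have "(\<Sum>s\<in>{1..n}. N q s * rep2 n M (unitm p q) s p) = (\<Sum>s\<in>{1..n}. N q s * (M p q * kron s p))"
    using pq by (simp add: rep2_unitm[OF pq(1,2)] kron_def)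
  also have "\<dots> = N q p * M p q"
    using pq by (simp add: kron_def mult_if_0 sum.delta' cong: if_cong)
  also have "(\<Sum>t\<in>{1..n}. N p t * rep2 n M (unitm p q) q t) = (\<Sum>t\<in>{1..n}. N p t * (M q p * kron t q))"
    using pq by (simp add: rep2_unitm[OF pq(1,2)] kron_def)
  also have "\<dots> = N p q * M q p"
    using pq by (simp add: kron_def mult_if_0 sum.delta' cong: if_cong)
  finally show ?thesis .
qed

lemma tunit_offdiag_kron: "a \<noteq> b \<Longrightarrow> tunit n i j a b = kron i a * kron j b"
  by (simp add: tunit_def idmat_def unitm_def kron_def)

lemma rep2_fa_quad:
  "rep2_fa n (quad n x) u a b = (\<Sum>i\<in>{1..n}. \<Sum>j\<in>{1..n}. \<Sum>k\<in>{1..n}. \<Sum>m\<in>{1..n}. x i j k m * rep2_word n [tunit n i j, tunit n k m] u a b)"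
  unfolding quad_def
  by (simp add: rep2_fa_sum rep2_fa_smult rep2_fa_word)

lemma rep2_fa_quad_unitm:
  assumes pq: "p \<in> {1..n}" "q \<in> {1..n}" "p \<noteq> q"
  shows "rep2_fa n (quad n x) (unitm p q) q p = x q p p q + x p q q p"
proof -
  have "rep2_fa n (quad n x) (unitm p q) q p = (\<Sum>i\<in>{1..n}. \<Sum>j\<in>{1..n}. \<Sum>k\<in>{1..n}. \<Sum>m\<in>{1..n}.
      x i j k m * (kron i q * kron j p * kron k p * kron m q) + x i j k m * (kron i p * kron j q * kron k q * kron m p))"
    unfolding rep2_fa_quad rep2_word2_unitm[OF pq] tunit_offdiag_kron[OF pq(3)] tunit_offdiag_kron[OF pq(3)[symmetric]]
    by (simp add: algebra_simps)
  also have "\<dots> = x q p p q + x p q q p"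
    unfolding sum.distrib sum4_kron[OF pq(2) pq(1) pq(1) pq(2)] sum4_kron[OF pq(1) pq(2) pq(2) pq(1)] ..
  finally show ?thesis .
qed


lemma skew_traceless_coord_pq:
  assumes "skew_traceless n x"
  shows "x q p p q + x p q q p = -2 * x p p q q"
  using skew_tracelessD(1)[OF assms, of q q p p] skew_tracelessD(2)[OF assms, of p q q p]
    skew_tracelessD(2)[OF assms, of q p p q]
  by simp

lemma basis_comb_coord_A:
  assumes "3 \<le> a" "a < b" "b \<le> n"
  shows "(\<Sum>J\<in>basis_idx n. c J * basis_tens J a a b b) = c (a,b,1,2)"
proof -
  have "(a,b,1,2) \<in> basis_idx n" using assms by (auto simp: basis_idx_def idx_A_iff)
  moreover have "(\<Sum>J\<in>basis_idx n. c J * basis_tens J a a b b) = (\<Sum>J\<in>basis_idx n. if J = (a,b,1,2) then c J else 0)"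
    using assms by (intro sum.cong refl) (simp add: basis_tens_coord_A)
  ultimately show ?thesis by (simp add: finite_basis_idx)
qed

lemma basis_comb_coord_B:
  assumes v: "4 \<le> v" "v \<le> n"
  shows "(\<Sum>J\<in>basis_idx n. c J * basis_tens J 1 1 v v)
    = (\<Sum>J\<in>idx_A n. c J * basis_tens J 1 1 v v) - c (1,3,2,v)"
proof -
  have "(\<Sum>J\<in>idx_B n. c J * basis_tens J 1 1 v v) = (\<Sum>J\<in>idx_B n. if J = (1,3,2,v) then - c J else 0)"
  proof (intro sum.cong refl)
    fix J assume "J \<in> idx_B n"
    then show "c J * basis_tens J 1 1 v v = (if J = (1,3,2,v) then - c J else 0)"
      using basis_tens_coord_B[OF _ v(1)] by simp
  qed
  moreover have "(1,3,2,v) \<in> idx_B n" using v by (auto simp: idx_B_iff)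
  ultimately show ?thesis
    unfolding basis_idx_def by (simp add: sum.union_disjoint finite_idx_A finite_idx_B idx_A_idx_B_disjoint)
qed

lemma basis_indep:
  assumes I: "(\<lambda>w. \<Sum>J\<in>basis_idx n. c J * quad n (basis_tens J) w) \<in> U_ideal n"
  shows "\<forall>J\<in>basis_idx n. c J = 0"
proof -
  define X where "X = (\<lambda>i j k m. \<Sum>J\<in>basis_idx n. c J * basis_tens J i j k m)"
  have X0: "X p p q q = 0" if pq: "p \<in> {1..n}" "q \<in> {1..n}" "p \<noteq> q" for p q
  proof -
    have skew: "skew_traceless n X"
      unfolding X_def by (intro skew_traceless_sum finite_basis_idx skew_traceless_basis_tens)
    have "rep2_fa n (quad n X) (unitm p q) q p = 0"
      using U_ideal_rep2_fa[OF I] unfolding X_def quad_sum by blast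
    then show ?thesis
      using rep2_fa_quad_unitm[OF pq] skew_traceless_coord_pq[OF skew, of q p] by simp
  qed
  have cA: "c J = 0" if A: "J \<in> idx_A n" for J
  proof -
    obtain a b where J: "J = (a,b,1,2)" "3 \<le> a" "a < b" "b \<le> n" using A unfolding idx_A_iff by blast
    then show ?thesis using X0[of a b] basis_comb_coord_A[OF J(2-4)] unfolding X_def by simp
  qed
  have "c J = 0" if B: "J \<in> idx_B n" for J
  proof -
    obtain v where J: "J = (1,3,2,v)" "4 \<le> v" "v \<le> n" using B unfolding idx_B_iff by blast
    then show ?thesis using X0[of 1 v] basis_comb_coord_B[OF J(2,3)] cA unfolding X_def by simp
  qed
  with cA show ?thesis unfolding basis_idx_def by blast
qed

section \<open>Spanning and counting\<close>

lemma sym_zero_colsum_vanish: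
  fixes y :: "nat \<Rightarrow> nat \<Rightarrow> complex"
  assumes n: "3 \<le> n"
    and sym: "\<And>a c. a \<in> {1..n} \<Longrightarrow> c \<in> {1..n} \<Longrightarrow> y a c = y c a"
    and diag: "\<And>a. y a a = 0"
    and col: "\<And>c. c \<in> {1..n} \<Longrightarrow> (\<Sum>a\<in>{1..n}. y a c) = 0"
    and A: "\<And>a c. 3 \<le> a \<Longrightarrow> a < c \<Longrightarrow> c \<le> n \<Longrightarrow> y a c = 0"
    and B: "\<And>v. 4 \<le> v \<Longrightarrow> v \<le> n \<Longrightarrow> y 1 v = 0"
    and ac: "a \<in> {1..n}" "c \<in> {1..n}"
  shows "y a c = 0"
proof -
  have split: "(\<Sum>a\<in>{1..n}. f a) = f 1 + f 2 + f 3 + (\<Sum>a\<in>{4..n}. f a)" for f :: "nat \<Rightarrow> complex"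
  proof -
    have "{1..n} = insert 1 (insert 2 (insert 3 {4..n}))" using n by auto
    then show ?thesis by (simp add: add.assoc)
  qed
  have ge3: "y a c = 0" if "3 \<le> a" "3 \<le> c" "a \<le> n" "c \<le> n" for a c
    using A[of a c] A[of c a] diag[of a] sym[of a c] that by (cases a c rule: linorder_cases) auto
  have far: "y a v = 0" if a: "a \<in> {1..n}" and v: "4 \<le> v" "v \<le> n" for a v
  proof -
    have "(\<Sum>a\<in>{4..n}. y a v) = 0" using v by (intro sum.neutral) (auto intro: ge3)
    then have y2: "y 2 v = 0" using col[of v] split[of "\<lambda>a. y a v"] B[OF v] ge3[of 3 v] v by simp
    consider "a = 1" | "a = 2" | "3 \<le> a" using a by force
    then show ?thesis using B[OF v] y2 ge3[of a v] a v by cases auto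
  qed
  have small: "y 1 c + y 2 c + y 3 c = 0" if "c \<in> {1, 2, 3}" for c
  proof -
    have "y a c = 0" if "a \<in> {4..n}" for a
      using that \<open>c \<in> {1, 2, 3}\<close> n sym[of a c] far[of c a] by auto
    then have "(\<Sum>a\<in>{4..n}. y a c) = 0" by simp
    then show ?thesis using col[of c] split[of "\<lambda>a. y a c"] that n by auto
  qed
  have "y 1 2 + y 1 3 = 0" "y 1 2 + y 2 3 = 0" "y 1 3 + y 2 3 = 0"
    using small[of 1] small[of 2] small[of 3] sym[of 1 2] sym[of 1 3] sym[of 2 3] diag n by simp_all
  then have "y 1 2 = 0" "y 1 3 = 0" "y 2 3 = 0"
    by (metis add.commute add_cancel_right_left add_diff_cancel_left' diff_add_cancel
        mult_2 mult_eq_0_iff zero_neq_numeral)+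
  then have block: "y a c = 0" if "a \<in> {1, 2, 3}" "c \<in> {1, 2, 3}" for a c
    using that diag sym[of a c] n by auto
  show ?thesis
  proof (cases "4 \<le> a \<or> 4 \<le> c")
    case True
    then show ?thesis using far[OF ac(1)] far[OF ac(2)] sym[OF ac] ac by auto
  next
    case False
    then have "a < 4" "c < 4" by auto
    then have "a \<in> {1, 2, 3}" "c \<in> {1, 2, 3}" using ac by auto
    then show ?thesis by (rule block)
  qed
qed

lemma skew_traceless_zero_weight_eq_0:
  assumes n: "3 \<le> n" and x: "skew_traceless n x" "zero_weight x"
    and A: "\<And>a c. 3 \<le> a \<Longrightarrow> a < c \<Longrightarrow> c \<le> n \<Longrightarrow> x a a c c = 0"
    and B: "\<And>v. 4 \<le> v \<Longrightarrow> v \<le> n \<Longrightarrow> x 1 1 v v = 0"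
    and box: "i \<in> {1..n}" "k \<in> {1..n}"
  shows "x i j k m = 0"
proof -
  have diag: "x i i k k = 0"
  proof (rule sym_zero_colsum_vanish[of n "\<lambda>a c. x a a c c", OF n _ _ _ A B box])
    show "x c c a a = x a a c c" for a c
      using skew_tracelessD(1)[OF x(1), of c c a a] skew_tracelessD(2)[OF x(1), of a c c a] by simp
    show "x a a a a = 0" for a
      using skew_tracelessD(1)[OF x(1), of a a a a] by simp
    show "(\<Sum>a\<in>{1..n}. x a a c c) = 0" for c
      by (rule skew_tracelessD(3)[OF x(1)])
  qed
  moreover have "x i k k i = - x i i k k"
    by (rule skew_tracelessD(2)[OF x(1)])
  ultimately show ?thesis
    using x(2) unfolding zero_weight_def by (cases "(i = j \<and> k = m) \<or> (i = m \<and> k = j)") auto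
qed

lemma zero_weight_span:
  assumes n: "3 \<le> n" and x: "skew_traceless n x" "zero_weight x"
  obtains c where "\<And>i j k m. i \<in> {1..n} \<Longrightarrow> k \<in> {1..n}
      \<Longrightarrow> x i j k m = (\<Sum>J\<in>basis_idx n. c J * basis_tens J i j k m)"
proof -
  define xA where "xA J = (case J of (a,c,_) \<Rightarrow> x a a c c)" for J :: "nat \<times> nat \<times> nat \<times> nat"
  define c where "c J = (if J \<in> idx_A n then xA J
      else (\<Sum>J'\<in>idx_A n. xA J' * basis_tens J' 1 1 (snd (snd (snd J))) (snd (snd (snd J))))
        - x 1 1 (snd (snd (snd J))) (snd (snd (snd J))))" for J
  define r where "r = (\<lambda>i j k m. x i j k m - (\<Sum>J\<in>basis_idx n. c J * basis_tens J i j k m))"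
  have "skew_traceless n (\<lambda>i j k m. \<Sum>J\<in>basis_idx n. c J * basis_tens J i j k m)"
    by (intro skew_traceless_sum finite_basis_idx skew_traceless_basis_tens)
  then have "skew_traceless n r"
    using skew_traceless_lincomb[OF x(1), of _ 1 "-1"] unfolding r_def by simp
  moreover have "zero_weight r"
    unfolding zero_weight_def r_def
  proof (intro allI impI)
    fix i j k m :: nat
    assume "\<not> ((i = j \<and> k = m) \<or> (i = m \<and> k = j))"
    then have "x i j k m = 0" "basis_tens J i j k m = 0" for J
      using x(2) zero_weight_basis_tens[of J] unfolding zero_weight_def by blast+
    then show "x i j k m - (\<Sum>J\<in>basis_idx n. c J * basis_tens J i j k m) = 0" by simp
  qed
  moreover have "r a a b b = 0" if "3 \<le> a" "a < b" "b \<le> n" for a b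
    using that by (simp add: r_def basis_comb_coord_A c_def xA_def idx_A_iff)
  moreover have "r 1 1 v v = 0" if "4 \<le> v" "v \<le> n" for v
  proof -
    have "(\<Sum>J\<in>idx_A n. c J * basis_tens J 1 1 v v) = (\<Sum>J\<in>idx_A n. xA J * basis_tens J 1 1 v v)"
      by (simp add: c_def)
    moreover have "c (1,3,2,v) = (\<Sum>J\<in>idx_A n. xA J * basis_tens J 1 1 v v) - x 1 1 v v"
      by (simp add: c_def idx_A_iff)
    ultimately show ?thesis unfolding r_def basis_comb_coord_B[OF that] by simp
  qed
  ultimately have "r i j k m = 0" if "i \<in> {1..n}" "k \<in> {1..n}" for i j k m
    using skew_traceless_zero_weight_eq_0[OF n, of r] that by blast
  then show ?thesis by (intro that[of c]) (simp add: r_def)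
qed

lemma R0_pre_span:
  assumes l: "l \<ge> 3" and f: "f \<in> R0_pre (l+1) (vprime l)"
  shows "\<exists>c. (\<lambda>w. f w - (\<Sum>J\<in>basis_idx (l+1). c J * quad (l+1) (basis_tens J) w)) \<in> U_ideal (l+1)"
proof -
  have "skew_traceless (l+1) (\<lambda>i j k m. (1/2) * wedge_tens 1 2 (l+1) l i j k m)"
    using l by (intro skew_traceless_smult skew_traceless_wedge_tens) auto
  then obtain x where x: "skew_traceless (l+1) x" "zero_weight x" and fx: "U_eq (l+1) f (quad (l+1) x)"
    using R0_pre_U_eq_quad[OF _ _ vprime_U_eq_quad[OF l] f] by auto
  obtain c where "\<And>i j k m. i \<in> {1..l+1} \<Longrightarrow> k \<in> {1..l+1}
      \<Longrightarrow> x i j k m = (\<Sum>J\<in>basis_idx (l+1). c J * basis_tens J i j k m)"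
    using zero_weight_span[OF _ x] l by auto
  then have "quad (l+1) x = (\<lambda>w. \<Sum>J\<in>basis_idx (l+1). c J * quad (l+1) (basis_tens J) w)"
    unfolding quad_sum[symmetric] by (intro quad_cong) simp
  then show ?thesis using fx unfolding U_eq_def by auto
qed

lemma card_pairs_ge3: "2 * card {(a,c). 3 \<le> a \<and> a < c \<and> c \<le> (n::nat)} = (n - 2) * (n - 3)"
proof (induction n)
  case 0
  have "{(a,c). 3 \<le> a \<and> a < c \<and> c \<le> (0::nat)} = {}" by auto
  then show ?case by (simp only: card.empty)
next
  case (Suc n)
  have split: "{(a,c). 3 \<le> a \<and> a < c \<and> c \<le> Suc n}
      = {(a,c). 3 \<le> a \<and> a < c \<and> c \<le> n} \<union> (\<lambda>a. (a, Suc n)) ` {3..n}"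
    by auto
  have "finite {(a,c). 3 \<le> a \<and> a < c \<and> c \<le> (n::nat)}"
    by (rule finite_subset[of _ "{..n} \<times> {..n}"]) auto
  moreover have "card ((\<lambda>a. (a, Suc n)) ` {3..n}) = n - 2"
    by (subst card_image) (auto simp: inj_on_def)
  ultimately have "2 * card {(a,c). 3 \<le> a \<and> a < c \<and> c \<le> Suc n} = (n - 2) * (n - 3) + 2 * (n - 2)"
    unfolding split using Suc by (subst card_Un_disjoint) auto
  also have "\<dots> = (Suc n - 2) * (Suc n - 3)"
  proof (cases "n \<ge> 3")
    case True
    then obtain k where "n = k + 3" using le_iff_add by (metis add.commute)
    then show ?thesis by (simp add: algebra_simps)
  next
    case False
    then have "n - 2 = 0" "Suc n - 3 = 0" by auto
    then show ?thesis by simp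
  qed
  finally show ?case .
qed

lemma card_basis_idx: "2 * card (basis_idx n) = n * (n - 3)"
proof -
  have "card (idx_A n) = card {(a,c). 3 \<le> a \<and> a < c \<and> c \<le> n}"
    unfolding idx_A_def by (rule card_image) (auto simp: inj_on_def)
  moreover have "card (idx_B n) = n - 3"
    unfolding idx_B_def by (subst card_image) (auto simp: inj_on_def)
  moreover have "card (basis_idx n) = card (idx_A n) + card (idx_B n)"
    unfolding basis_idx_def by (rule card_Un_disjoint) (rule finite_idx_A finite_idx_B idx_A_idx_B_disjoint)+
  ultimately have "2 * card (basis_idx n) = (n - 2) * (n - 3) + 2 * (n - 3)"
    using card_pairs_ge3[of n] by linarith
  also have "\<dots> = n * (n - 3)"
  proof (cases "n \<ge> 3")
    case True
    then obtain k where "n = k + 3" using le_iff_add by (metis add.commute)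
    then show ?thesis by (simp add: algebra_simps)
  qed simp
  finally show ?thesis .
qed

lemma inj_on_of_indep:
  fixes F :: "'i \<Rightarrow> fa"
  assumes fin: "finite S" and zero: "(\<lambda>w. 0) \<in> I"
    and indep: "\<And>c. (\<lambda>w. \<Sum>J\<in>S. c J * F J w) \<in> I \<Longrightarrow> \<forall>J\<in>S. c J = 0"
  shows "inj_on F S"
proof (rule inj_onI, rule ccontr)
  fix J1 J2 assume J: "J1 \<in> S" "J2 \<in> S" "F J1 = F J2" "J1 \<noteq> J2"
  define c where "c J = (if J = J1 then 1 else if J = J2 then -1 else 0 :: complex)" for J
  have "(\<Sum>J\<in>S. c J * F J w) = (\<Sum>J\<in>S. (if J = J1 then F J1 w else 0) + (if J = J2 then - F J2 w else 0))" for w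
    using J by (intro sum.cong refl) (auto simp: c_def)
  then have "(\<lambda>w. \<Sum>J\<in>S. c J * F J w) = (\<lambda>w. 0)"
    using J fin by (simp add: sum.distrib)
  then have "c J1 = 0" using indep zero J(1) by metis
  then show False by (simp add: c_def)
qed

lemma quot_dim_family:
  fixes F :: "'i \<Rightarrow> fa"
  assumes fin: "finite S" and zero: "(\<lambda>w. 0) \<in> I"
    and mem: "\<And>J. J \<in> S \<Longrightarrow> F J \<in> V"
    and indep: "\<And>c. (\<lambda>w. \<Sum>J\<in>S. c J * F J w) \<in> I \<Longrightarrow> \<forall>J\<in>S. c J = 0"
    and span: "\<And>f. f \<in> V \<Longrightarrow> \<exists>c. (\<lambda>w. f w - (\<Sum>J\<in>S. c J * F J w)) \<in> I"
  shows "quot_dim I V (card S)"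
proof -
  have inj: "inj_on F S" using fin zero indep by (rule inj_on_of_indep)
  have reindex: "(\<Sum>b\<in>F ` S. c b * b w) = (\<Sum>J\<in>S. c (F J) * F J w)" for c w
    using inj by (rule sum.reindex_cong) auto
  show ?thesis
    unfolding quot_dim_def
  proof (intro exI[of _ "F ` S"] conjI allI impI ballI)
    show "finite (F ` S)" "card (F ` S) = card S" "F ` S \<subseteq> V"
      using fin inj mem by (auto simp: card_image)
  next
    fix c b assume "(\<lambda>w. \<Sum>b\<in>F ` S. c b * b w) \<in> I" "b \<in> F ` S"
    then show "c b = 0" using indep[of "c \<circ> F"] unfolding reindex by auto
  next
    fix f assume "f \<in> V"
    then obtain c where "(\<lambda>w. f w - (\<Sum>J\<in>S. c J * F J w)) \<in> I" using span by blast
    moreover have "(\<Sum>b\<in>F ` S. c (the_inv_into S F b) * b w) = (\<Sum>J\<in>S. c J * F J w)" for w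
      unfolding reindex using inj by (simp add: the_inv_into_f_f)
    ultimately show "\<exists>c. (\<lambda>w. f w - (\<Sum>b\<in>F ` S. c b * b w)) \<in> I"
      by (intro exI[of _ "\<lambda>b. c (the_inv_into S F b)"]) simp
  qed
qed

theorem lemma5p2:
  fixes l :: nat
  assumes "l \<ge> 3"
  shows "quot_dim (U_ideal (l+1)) (R0_pre (l+1) (vprime l)) ((l - 2) * (l + 1) div 2)"
proof -
  have "2 * card (basis_idx (l+1)) = (l - 2) * (l + 1)"
    using card_basis_idx[of "l+1"] by (simp add: mult.commute)
  then have "(l - 2) * (l + 1) div 2 = card (basis_idx (l+1))"
    by (simp add: \<open>2 * card (basis_idx (l+1)) = (l - 2) * (l + 1)\<close>[symmetric])
  moreover have "quot_dim (U_ideal (l+1)) (R0_pre (l+1) (vprime l)) (card (basis_idx (l+1)))"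
  proof (rule quot_dim_family[where F="\<lambda>J. quad (l+1) (basis_tens J)"])
    show "finite (basis_idx (l+1))" by (rule finite_basis_idx)
    show "(\<lambda>w. 0) \<in> U_ideal (l+1)" by (rule U_ideal.zero)
    show "quad (l+1) (basis_tens J) \<in> R0_pre (l+1) (vprime l)" if "J \<in> basis_idx (l+1)" for J
      using assms that by (rule quad_basis_tens_R0_pre)
    show "\<forall>J\<in>basis_idx (l+1). c J = 0"
      if "(\<lambda>w. \<Sum>J\<in>basis_idx (l+1). c J * quad (l+1) (basis_tens J) w) \<in> U_ideal (l+1)" for c
      using that by (rule basis_indep)
    show "\<exists>c. (\<lambda>w. f w - (\<Sum>J\<in>basis_idx (l+1). c J * quad (l+1) (basis_tens J) w)) \<in> U_ideal (l+1)"
      if "f \<in> R0_pre (l+1) (vprime l)" for f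
      using assms that by (rule R0_pre_span)
  qed
  ultimately show ?thesis by simp
qed

end
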